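(* Let $\Xi$, $F_\beta$, $\beta_3$, $\beta_1=2$, $\mathbf{p}$, $\mathbf{m}_i^\beta$, $\boldsymbol{\sigma}_i^\beta$ be as in the context. For $\beta>\beta_3$ let $H_\beta=F_\beta(\boldsymbol{\sigma}_0^\beta)$ $(=F_\beta(\boldsymbol{\sigma}_1^\beta)=F_\beta(\boldsymbol{\sigma}_2^\beta))$, $W_\beta=\{\mathbf{x}\in\Xi: F_\beta(\mathbf{x})<H_\beta\}$, let $W_\beta(i)$, $0\le i\le2$, be the connected component of $W_\beta$ containing $\mathbf{m}_i^\beta$, and, for $\beta<\beta_1$, let $W_\beta(3)$ be the connected component of $W_\beta$ containing $\mathbf{p}$. For $i\ne j$ let $\mathfrak{S}_{i,j}=\overline{W_\beta(i)}\cap\overline{W_\beta(j)}$. Then: (1) For $\beta\ge\beta_1$, the sets $W_\beta(i)$, $0\le i\le2$, are pairwise different. (2) For $\beta>\beta_1$, $\mathfrak{S}_{i,j}=\{\boldsymbol{\sigma}_k^\beta\}$ whenever $\{i,j,k\}=\{0,1,2\}$. (3) For $\beta=\beta_1$ and $0\le i\ne j\le2$, $\mathfrak{S}_{i,j}=\{\mathbf{p}\}$. (4) For $\beta_3<\beta<\beta_1$, the sets $W_\beta(i)$, $0\le i\le3$, are pairwise different. (5) For $\beta_3<\beta<\beta_1$, $\mathfrak{S}_{i,j}=\varnothing$ for $0\le i\ne j\le2$, and $\mathfrak{S}_{i,3}=\{\boldsymbol{\sigma}_i^\beta\}$ for $0\le i\le2$.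
   Context: $\Xi=\{(x_1,x_2): x_1,x_2\ge0,\ x_1+x_2\le1\}$, $x_0=1-x_1-x_2$, $F_\beta(\mathbf{x})=-\frac12|\sum_{k=0}^2x_k\mathbf{v}_k|^2+\frac1\beta\sum_{k=0}^2x_k\log(3x_k)$ with $\mathbf{v}_k=(\cos(2\pi k/3),\sin(2\pi k/3))$ and $0\log0=0$. $\mathbf{p}=(1/3,1/3)$. Define $f_0(t)=\frac{2}{3(1-3t)}\log\frac{1-2t}{t}$ for $t\in(0,1/2)\setminus\{1/3\}$, $f_0(1/3)=2$; $m_0$ is the minimizer of $f_0$ and $\beta_3=f_0(m_0)$. For $\beta>\beta_3$ the equation $f_0(t)=\beta$ has exactly two solutions $p_\beta<m_0<q_\beta$ in $(0,1/2)$ (for $\beta=2$, $q_\beta=1/3$). Set $\mathbf{m}_0^\beta=(p_\beta,p_\beta)$, $\mathbf{m}_1^\beta=(1-2p_\beta,p_\beta)$, $\mathbf{m}_2^\beta=(p_\beta,1-2p_\beta)$, $\boldsymbol{\sigma}_0^\beta=(q_\beta,q_\beta)$, $\boldsymbol{\sigma}_1^\beta=(1-2q_\beta,q_\beta)$, $\boldsymbol{\sigma}_2^\beta=(q_\beta,1-2q_\beta)$. $\overline{A}$ denotes closure. *)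

theory Defs
  imports "HOL-Analysis.Analysis"
begin

text \<open>Points of the plane are pairs (x1, x2); x0 = 1 - x1 - x2.\<close>

definition Xi :: "(real \<times> real) set" where
  "Xi = {(x1, x2). 0 \<le> x1 \<and> 0 \<le> x2 \<and> x1 + x2 \<le> 1}"

definition xlog3 :: "real \<Rightarrow> real" where
  "xlog3 x = (if x = 0 then 0 else x * ln (3 * x))"

definition vx :: "nat \<Rightarrow> real" where "vx k = cos (2 * pi * real k / 3)"
definition vy :: "nat \<Rightarrow> real" where "vy k = sin (2 * pi * real k / 3)"

definition coord :: "real \<times> real \<Rightarrow> nat \<Rightarrow> real" where
  "coord x k = (if k = 0 then 1 - fst x - snd x else if k = 1 then fst x else snd x)"

definition F :: "real \<Rightarrow> real \<times> real \<Rightarrow> real" where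
  "F \<beta> x = - (1/2) * ((\<Sum>k<3. coord x k * vx k)\<^sup>2 + (\<Sum>k<3. coord x k * vy k)\<^sup>2)
            + (1 / \<beta>) * (\<Sum>k<3. xlog3 (coord x k))"

definition p_pt :: "real \<times> real" where "p_pt = (1/3, 1/3)"

definition f0 :: "real \<Rightarrow> real" where
  "f0 t = (if t = 1/3 then 2 else 2 / (3 * (1 - 3 * t)) * ln ((1 - 2 * t) / t))"

definition m0 :: real where
  "m0 = (THE t. t \<in> {0<..<1/2} \<and> (\<forall>s\<in>{0<..<1/2}. f0 t \<le> f0 s))"

definition beta3 :: real where "beta3 = f0 m0"

definition p_beta :: "real \<Rightarrow> real" where
  "p_beta \<beta> = (THE t. 0 < t \<and> t < m0 \<and> f0 t = \<beta>)"

definition q_beta :: "real \<Rightarrow> real" where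
  "q_beta \<beta> = (THE t. m0 < t \<and> t < 1/2 \<and> f0 t = \<beta>)"

definition mpt :: "real \<Rightarrow> nat \<Rightarrow> real \<times> real" where
  "mpt \<beta> i = (let p = p_beta \<beta> in
     if i = 0 then (p, p) else if i = 1 then (1 - 2 * p, p) else (p, 1 - 2 * p))"

definition sigma :: "real \<Rightarrow> nat \<Rightarrow> real \<times> real" where
  "sigma \<beta> i = (let q = q_beta \<beta> in
     if i = 0 then (q, q) else if i = 1 then (1 - 2 * q, q) else (q, 1 - 2 * q))"

definition H :: "real \<Rightarrow> real" where "H \<beta> = F \<beta> (sigma \<beta> 0)"

definition W :: "real \<Rightarrow> (real \<times> real) set" where
  "W \<beta> = {x \<in> Xi. F \<beta> x < H \<beta>}"

definition Wc :: "real \<Rightarrow> nat \<Rightarrow> (real \<times> real) set" where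
  "Wc \<beta> i = (if i = 3 then connected_component_set (W \<beta>) p_pt
             else connected_component_set (W \<beta>) (mpt \<beta> i))"

definition Sfrak :: "real \<Rightarrow> nat \<Rightarrow> nat \<Rightarrow> (real \<times> real) set" where
  "Sfrak \<beta> i j = closure (Wc \<beta> i) \<inter> closure (Wc \<beta> j)"

end

theory Submission
  imports Defs "HOL-Real_Asymp.Real_Asymp"
begin

(* F is separable: F x = G x_0 + G x_1 + G x_2 + 1/4 with G t = -3/4 t^2 + t ln (3t) / beta.
   On the symmetry axis through vertex i, F = phi a + 1/4 with
   phi' a = 3 (1 - 3a) (1 - f0 a / beta), so the critical points on the axes are a = 1/3,
   a = p_beta (the minima m_i) and a = q_beta (the saddles sigma_i); as G' is strictly concave,
   every interior critical point of F lies on an axis.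

   For beta >= 2 the sublevel set W avoids all points where the two largest coordinates tie, so
   its components are separated by the dominant coordinate. For beta > 2 a component in the region
   of coordinate i attains its minimum at an interior critical point, which must be m_i, and
   beta q_beta > 2/3 makes sigma_k a transversal maximum that both neighbouring components approach.
   For beta < 2 instead beta q_beta < 2/3, so F >= H on the level sets x_i = 1 - 2 q_beta: W splits
   into an inner part containing p and three outer parts, which touch it only at the saddles. *)

section \<open>Separable form of the free energy\<close>

definition G :: "real \<Rightarrow> real \<Rightarrow> real" where
  "G b t = - 3/4 * t\<^sup>2 + (1/b) * xlog3 t"

definition G' :: "real \<Rightarrow> real \<Rightarrow> real" where
  "G' b t = - 3/2 * t + (ln (3*t) + 1) / b"

lemma vx_simps: "vx 0 = 1" "vx 1 = -1/2" "vx 2 = -1/2"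
proof -
  show "vx 0 = 1" by (simp add: vx_def)
  show "vx 1 = -1/2" by (simp add: vx_def cos_120)
  have "vx 2 = cos (pi + pi/3)" unfolding vx_def by (rule arg_cong[where f=cos]) simp
  also have "\<dots> = -1/2" by (simp only: cos_add cos_60 cos_pi sin_pi)
  finally show "vx 2 = -1/2" .
qed

lemma vy_simps: "vy 0 = 0" "vy 1 = sqrt 3/2" "vy 2 = - sqrt 3/2"
proof -
  show "vy 0 = 0" by (simp add: vy_def)
  have "vy 1 = sin (pi * 2 / 3)" unfolding vy_def by (rule arg_cong[where f=sin]) simp
  also have "\<dots> = sqrt 3/2" by (simp add: sin_120')
  finally show "vy 1 = sqrt 3/2" .
  have "vy 2 = sin (pi + pi/3)" unfolding vy_def by (rule arg_cong[where f=sin]) simp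
  also have "\<dots> = - sqrt 3/2" by (simp only: sin_add sin_60 cos_pi sin_pi)
  finally show "vy 2 = - sqrt 3/2" .
qed

lemma sum_lessThan_3: "(\<Sum>k<3. f k) = f 0 + f 1 + (f 2 :: real)" for f :: "nat \<Rightarrow> real"
  by (simp add: numeral_3_eq_3 numeral_2_eq_2 lessThan_Suc)

(* The v_k are unit vectors with pairwise inner products -1/2, so
   |\<Sum> x_k v_k|\<^sup>2 = 3/2 \<Sum> x_k\<^sup>2 - 1/2 (\<Sum> x_k)\<^sup>2 and \<Sum> x_k = 1. *)
lemma F_eq_sum_G: "F b x = G b (coord x 0) + G b (coord x 1) + G b (coord x 2) + 1/4"
proof -
  obtain x1 x2 where x: "x = (x1, x2)" by (cases x)
  have vx_sum: "(\<Sum>k<3. coord x k * vx k) = (1 - x1 - x2) - x1/2 - x2/2"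
    unfolding sum_lessThan_3 by (simp add: vx_simps[simplified] coord_def x)
  have vy_sum: "(\<Sum>k<3. coord x k * vy k) = (x1 - x2) * sqrt 3 / 2"
    unfolding sum_lessThan_3 by (simp add: vy_simps[simplified] coord_def x algebra_simps)
  have "sqrt 3 * sqrt 3 = (3::real)" by simp
  then show ?thesis
    unfolding F_def G_def vx_sum vy_sum sum_lessThan_3
    by (simp add: coord_def x power2_eq_square algebra_simps add_divide_distrib diff_divide_distrib)
qed

lemma xlog3_has_real_derivative:
  assumes "t > 0" shows "(xlog3 has_real_derivative (ln (3*t) + 1)) (at t)"
proof -
  have "((\<lambda>t. t * ln (3*t)) has_real_derivative (ln (3*t) + 1)) (at t)"
    using assms by (auto intro!: derivative_eq_intros simp: field_simps)
  then show ?thesis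
    by (rule has_field_derivative_transform_within_open[where S="{0<..}"])
       (use assms in \<open>auto simp: xlog3_def\<close>)
qed

lemma continuous_on_xlog3: "continuous_on {0..} xlog3"
  unfolding continuous_on_eq_continuous_within
proof
  fix t :: real assume t: "t \<in> {0..}"
  show "continuous (at t within {0..}) xlog3"
  proof (cases "t = 0")
    case True
    have "((\<lambda>x::real. x * ln (3*x)) \<longlongrightarrow> 0) (at_right 0)" by real_asymp
    then have "(xlog3 \<longlongrightarrow> 0) (at_right 0)"
      by (rule Lim_transform_eventually) (auto simp: xlog3_def eventually_at_right_less)
    then show ?thesis
      using True by (simp add: continuous_within at_within_Ici_at_right xlog3_def)
  next
    case False
    then have "t > 0" using t by auto
    then have "isCont xlog3 t" using xlog3_has_real_derivative DERIV_isCont by blast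
    then show ?thesis by (simp add: continuous_at_imp_continuous_within)
  qed
qed

lemma G_has_real_derivative:
  assumes "t > 0" shows "(G b has_real_derivative G' b t) (at t)"
proof -
  define c where "c = 1/b"
  have "((\<lambda>t. - 3/4 * t\<^sup>2 + c * xlog3 t) has_real_derivative
          (- 3/4 * (2*t) + c * (ln (3*t) + 1))) (at t)"
    by (auto intro!: derivative_eq_intros xlog3_has_real_derivative[OF assms])
  then show ?thesis
    unfolding G_def[abs_def] G'_def c_def by (cases "b = 0") (simp_all add: field_simps)
qed

lemma continuous_on_G: "continuous_on {0..} (G b)"
  unfolding G_def[abs_def] by (intro continuous_intros continuous_on_xlog3)

lemma G_0 [simp]: "G b 0 = 0"
  by (simp add: G_def xlog3_def)

lemma G_mean_value:
  assumes "0 < a" "a < c"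
  obtains z where "a < z" "z < c" "G b c - G b a = (c - a) * G' b z"
proof -
  have "continuous_on {a..c} (G b)"
    using assms by (intro continuous_on_subset[OF continuous_on_G]) auto
  moreover have "G b differentiable (at x)" if "a < x" "x < c" for x
    using G_has_real_derivative[of x b] that assms by (auto simp: real_differentiable_def)
  ultimately obtain l z where z: "a < z" "z < c" "DERIV (G b) z :> l" "G b c - G b a = (c - a) * l"
    using MVT[OF assms(2)] by blast
  have "l = G' b z" using DERIV_unique[OF z(3) G_has_real_derivative] z assms by auto
  then show ?thesis using that z by blast
qed

lemma G'_has_real_derivative:
  "0 < t \<Longrightarrow> (G' b has_real_derivative (- 3/2 + 1 / (b * t))) (at t)"
  unfolding G'_def[abs_def]
  by (cases "b = 0") (auto intro!: derivative_eq_intros simp: field_simps)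

lemma coord_sum: "coord x 0 + coord x 1 + coord x 2 = 1"
  by (simp add: coord_def)

lemma indices3:
  assumes "{i, j, k} = {0, 1, 2::nat}"
  shows "i < 3" "j < 3" "k < 3" "i \<noteq> j" "i \<noteq> k" "j \<noteq> k"
proof -
  have card: "card {i, j, k} = 3" using assms by simp
  have two: "card {x, y::nat} \<le> 2" for x y by (simp add: card_insert_if)
  show "i \<noteq> j"
  proof
    assume "i = j" then have "{i, j, k} = {j, k}" by auto
    then show False using card two[of j k] by simp
  qed
  show "i \<noteq> k"
  proof
    assume "i = k" then have "{i, j, k} = {j, k}" by auto
    then show False using card two[of j k] by simp
  qed
  show "j \<noteq> k"
  proof
    assume "j = k" then have "{i, j, k} = {i, k}" by auto
    then show False using card two[of i k] by simp
  qed
  have "i \<in> {0, 1, 2::nat}" "j \<in> {0, 1, 2::nat}" "k \<in> {0, 1, 2::nat}" using assms by blast+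
  then show "i < 3" "j < 3" "k < 3" by auto
qed

lemma indices3_cases: assumes "{i, j, k} = {0, 1, 2::nat}" "l < 3" shows "l = i \<or> l = j \<or> l = k"
proof -
  have "l \<in> {0, 1, 2}" using assms(2) by auto
  then show ?thesis unfolding assms(1)[symmetric] by blast
qed

lemma indices3_complete: assumes "(i::nat) < 3" "j < 3" "i \<noteq> j"
  shows "{i, j, 3 - i - j} = {0, 1, 2}"
proof -
  have "i = 0 \<or> i = 1 \<or> i = 2" "j = 0 \<or> j = 1 \<or> j = 2" using assms by auto
  then show ?thesis using assms(3) by (elim disjE) auto
qed

lemma indices3_exists: assumes "(i::nat) < 3" shows "\<exists>j k. {i, j, k} = {0, 1, 2}"
proof (cases "i = 0")
  case True
  then show ?thesis using indices3_complete[of 0 1] by blast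
next
  case False
  then have "{i, 0, 3 - i - 0} = {0, 1, 2::nat}" using indices3_complete[OF assms, of 0] by simp
  then show ?thesis by blast
qed

lemma sum_indices3:
  assumes "{i, j, k} = {0, 1, 2::nat}"
  shows "f 0 + f 1 + f 2 = f i + f j + (f k :: 'a::comm_monoid_add)"
proof -
  have "f i + f j + f k = sum f {i, j, k}" using indices3[OF assms] by (simp add: add_ac)
  also have "\<dots> = f 0 + f 1 + f 2" unfolding assms by (simp add: add_ac)
  finally show ?thesis ..
qed

lemma coord_sum_indices3: "{i, j, k} = {0, 1, 2::nat} \<Longrightarrow> coord x i + coord x j + coord x k = 1"
  using sum_indices3[of i j k "coord x"] coord_sum[of x] by simp

lemma F_eq_sum_G_indices3: "{i, j, k} = {0, 1, 2::nat} \<Longrightarrow>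
    F b x = G b (coord x i) + G b (coord x j) + G b (coord x k) + 1/4"
  using sum_indices3[of i j k "\<lambda>l. G b (coord x l)"] by (simp add: F_eq_sum_G)

lemma coord_eqI: "coord x 1 = coord y 1 \<Longrightarrow> coord x 2 = coord y 2 \<Longrightarrow> x = y"
  by (cases x; cases y) (auto simp: coord_def)

lemma Xi_iff_coord_nonneg: "x \<in> Xi \<longleftrightarrow> (\<forall>k<3. 0 \<le> coord x k)"
  by (cases x) (auto simp: Xi_def coord_def numeral_3_eq_3 less_Suc_eq)

lemma coord_nonneg: "x \<in> Xi \<Longrightarrow> k < 3 \<Longrightarrow> 0 \<le> coord x k"
  by (simp add: Xi_iff_coord_nonneg)

lemma continuous_on_coord: "continuous_on S (\<lambda>x. coord x k)"
  unfolding coord_def by (cases "k = 0"; cases "k = 1") (auto intro!: continuous_intros)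

lemma closed_Xi: "closed Xi"
proof -
  have "Xi = (\<Inter>k<3. {x. 0 \<le> coord x k})" by (auto simp: Xi_iff_coord_nonneg)
  moreover have "closed {x. 0 \<le> coord x k}" for k
    by (intro closed_Collect_le continuous_on_const continuous_on_coord)
  ultimately show ?thesis by (metis closed_INT)
qed

lemma convex_Xi: "convex Xi"
  unfolding convex_def
proof (intro allI impI ballI)
  fix x y :: "real \<times> real" and u v :: real
  assume x: "x \<in> Xi" and y: "y \<in> Xi" and uv: "0 \<le> u" "0 \<le> v" "u + v = 1"
  obtain a b c d where xy: "x = (a, b)" "y = (c, d)" by (cases x, cases y)
  have h: "0 \<le> a" "0 \<le> b" "a + b \<le> 1" "0 \<le> c" "0 \<le> d" "c + d \<le> 1"
    using x y xy by (auto simp: Xi_def)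
  have "u * a + v * c + (u * b + v * d) = u * (a + b) + v * (c + d)" by (simp add: algebra_simps)
  also have "\<dots> \<le> u * 1 + v * 1" using h uv by (intro add_mono mult_left_mono) auto
  finally show "u *\<^sub>R x + v *\<^sub>R y \<in> Xi" using h uv xy by (auto simp: Xi_def)
qed

lemma bounded_Xi: "bounded Xi"
proof -
  have "Xi \<subseteq> {0..1} \<times> {0..1}" by (auto simp: Xi_def)
  then show ?thesis
    by (rule bounded_subset[OF bounded_Times[OF bounded_closed_interval bounded_closed_interval]])
qed

lemma continuous_on_F: "continuous_on Xi (F b)"
  unfolding F_eq_sum_G[abs_def]
  by (intro continuous_intros continuous_on_compose2[OF continuous_on_G] continuous_on_coord)
     (auto simp: Xi_iff_coord_nonneg)

section \<open>The function f0 and the roots p_beta, q_beta\<close>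

definition log_ratio :: "real \<Rightarrow> real" where
  "log_ratio t = ln (1 - 2*t) - ln t"

text \<open>Up to the positive factor 2/(3 (1 - 3t)^2), the numerator of the derivative of f0.\<close>
definition f0_numer :: "real \<Rightarrow> real" where
  "f0_numer t = 3 * log_ratio t - (1 - 3*t) / (t * (1 - 2*t))"

lemma f0_eq_log_ratio:
  "0 < t \<Longrightarrow> t < 1/2 \<Longrightarrow> t \<noteq> 1/3 \<Longrightarrow> f0 t = 2 / (3 * (1 - 3*t)) * log_ratio t"
  by (simp add: f0_def log_ratio_def ln_div)

lemma f0_one_third [simp]: "f0 (1/3) = 2"
  by (simp add: f0_def)

lemma log_ratio_has_real_derivative:
  "0 < t \<Longrightarrow> t < 1/2 \<Longrightarrow> (log_ratio has_real_derivative (- 1 / (t * (1 - 2*t)))) (at t)"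
  unfolding log_ratio_def[abs_def] by (auto intro!: derivative_eq_intros simp: field_simps)

lemma f0_numer_has_real_derivative:
  assumes "0 < t" "t < 1/2"
  shows "(f0_numer has_real_derivative ((3*t - 1) * (4*t - 1) / (t * (1 - 2*t))\<^sup>2)) (at t)"
proof -
  define D where "D = t * (1 - 2*t)"
  have D: "D \<noteq> 0" using assms by (simp add: D_def)
  have "(f0_numer has_real_derivative
      (3 * (- 1 / D) - ((- 3) * D - (1 - 3*t) * (1 - 4*t)) / D\<^sup>2)) (at t)"
    unfolding f0_numer_def[abs_def] D_def using assms
    by (auto intro!: derivative_eq_intros log_ratio_has_real_derivative
        simp: power2_eq_square algebra_simps)
  moreover have "3 * (- 1 / D) - ((- 3) * D - (1 - 3*t) * (1 - 4*t)) / D\<^sup>2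
      = (3*t - 1) * (4*t - 1) / D\<^sup>2"
    using D by (simp add: field_simps power2_eq_square)
  ultimately show ?thesis by (simp add: D_def)
qed

lemma f0_has_real_derivative: assumes "0 < t" "t < 1/2" "t \<noteq> 1/3"
  shows "(f0 has_real_derivative (2/3 * f0_numer t / (1 - 3*t)\<^sup>2)) (at t)"
proof -
  have u: "1 - 3*t \<noteq> 0" using assms by auto
  have D: "t * (1 - 2*t) \<noteq> 0" using assms by auto
  have h: "((\<lambda>t. 2 / (3 * (1 - 3*t))) has_real_derivative (2 / (1 - 3*t)\<^sup>2)) (at t)"
  proof -
    have "((\<lambda>t. 2 / (3 * (1 - 3*t))) has_real_derivative
       ((0 * (3 * (1 - 3*t)) - 2 * (3 * (0 - 3 * 1))) / ((3 * (1 - 3*t)) * (3 * (1 - 3*t)))))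
       (at t)"
      by (rule DERIV_divide) (use u in \<open>auto intro!: derivative_eq_intros\<close>)
    moreover have gen: "\<And>u::real. u \<noteq> 0 \<Longrightarrow>
        (0 * (3 * u) - 2 * (3 * (0 - 3 * 1))) / ((3 * u) * (3 * u)) = 2 / u\<^sup>2"
      by (simp add: field_simps power2_eq_square)
    ultimately show ?thesis using gen[OF u] by simp
  qed
  have "((\<lambda>t. 2 / (3 * (1 - 3*t)) * log_ratio t) has_real_derivative
      (2 / (1 - 3*t)\<^sup>2 * log_ratio t + (- 1 / (t * (1 - 2*t))) * (2 / (3 * (1 - 3*t))))) (at t)"
    by (rule DERIV_mult[OF h log_ratio_has_real_derivative]) (use assms in auto)
  moreover have "2 / (1 - 3*t)\<^sup>2 * log_ratio t + (- 1 / (t * (1 - 2*t))) * (2 / (3 * (1 - 3*t)))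
      = 2/3 * f0_numer t / (1 - 3*t)\<^sup>2"
  proof -
    have gen: "\<And>u D L::real. u \<noteq> 0 \<Longrightarrow> D \<noteq> 0 \<Longrightarrow>
      2 / u\<^sup>2 * L + (- 1 / D) * (2 / (3 * u)) = 2/3 * (3 * L - u / D) / u\<^sup>2"
      by (simp add: field_simps power2_eq_square)
    show ?thesis unfolding f0_numer_def by (rule gen[OF u D])
  qed
  ultimately have "((\<lambda>t. 2 / (3 * (1 - 3*t)) * log_ratio t) has_real_derivative
      (2/3 * f0_numer t / (1 - 3*t)\<^sup>2)) (at t)"
    by simp
  then show ?thesis
    by (rule has_field_derivative_transform_within_open[where S="{0<..<1/2} - {1/3}"])
       (use assms in \<open>auto simp: f0_eq_log_ratio\<close>)
qed

lemma ln_less_minus_one: assumes "0 < (y::real)" "y \<noteq> 1" shows "ln y < y - 1"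
proof -
  have "ln y = 2 * ln (sqrt y)" using assms by (simp add: ln_sqrt)
  also have "\<dots> \<le> 2 * (sqrt y - 1)" using ln_le_minus_one[of "sqrt y"] assms by simp
  also have "\<dots> < y - 1"
  proof -
    have "0 < (sqrt y - 1)\<^sup>2" using assms by simp
    then show ?thesis using assms by (simp add: power2_eq_square algebra_simps)
  qed
  finally show ?thesis .
qed

lemma one_minus_inverse_le_ln: "0 < (y::real) \<Longrightarrow> 1 - 1/y \<le> ln y"
  using ln_le_minus_one[of "1/y"] by (simp add: ln_div)

lemma ln_div_diff_one_between:
  assumes "0 < (y::real)" "y \<noteq> 1"
  shows "min 1 (1/y) \<le> ln y / (y - 1) \<and> ln y / (y - 1) \<le> max 1 (1/y)"
proof -
  have upper: "ln y \<le> y - 1" and lower: "(y - 1) / y \<le> ln y"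
    using ln_le_minus_one[OF assms(1)] one_minus_inverse_le_ln[OF assms(1)] assms(1)
    by (simp_all add: diff_divide_distrib)
  show ?thesis
  proof (cases "1 < y")
    case True
    then have "ln y / (y - 1) \<le> 1" "1/y \<le> ln y / (y - 1)" "1/y \<le> 1"
      using upper divide_right_mono[OF lower, of "y - 1"] by (simp_all add: divide_le_eq)
    then show ?thesis by simp
  next
    case False
    then have y1: "y < 1" using assms(2) by simp
    then have "1 \<le> ln y / (y - 1)" "ln y / (y - 1) \<le> 1/y" "1 \<le> 1/y"
      using upper divide_right_mono_neg[OF lower, of "y - 1"] assms(1)
        by (simp_all add: le_divide_eq)
    then show ?thesis by simp
  qed
qed

text \<open>f0 t = 2/(3t) * ln y/(y - 1) with y = (1 - 2t)/t.\<close>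
lemma f0_between:
  assumes "0 < t" "t < 1/2"
  shows "min (2/(3*t)) (2/(3*(1-2*t))) \<le> f0 t \<and> f0 t \<le> max (2/(3*t)) (2/(3*(1-2*t)))"
proof (cases "t = 1/3")
  case False
  define y where "y = (1 - 2*t) / t"
  have y: "0 < y" "y \<noteq> 1" "y - 1 = (1 - 3*t) / t"
    using assms False by (auto simp: y_def field_simps)
  have f: "f0 t = 2/(3*t) * (ln y / (y - 1))"
    using assms False by (simp add: f0_def y field_simps y_def)
  have c: "2/(3*t) * 1 = 2/(3*t)" "2/(3*t) * (1/y) = 2/(3*(1-2*t))" "0 \<le> 2/(3*t)"
    using assms y(1) by (simp_all add: y_def field_simps)
  show ?thesis
    using mult_left_mono[OF conjunct1[OF ln_div_diff_one_between[OF y(1,2)]] c(3)]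
      mult_left_mono[OF conjunct2[OF ln_div_diff_one_between[OF y(1,2)]] c(3)]
    unfolding f min_mult_distrib_left max_mult_distrib_left c using assms by simp
next
  case True
  then show ?thesis unfolding True by simp
qed

lemma f0_pos: assumes "0 < t" "t < 1/2" shows "0 < f0 t"
proof -
  have "0 < min (2/(3*t)) (2/(3*(1-2*t)))" using assms by simp
  then show ?thesis using f0_between[OF assms] by linarith
qed

lemma isCont_f0: assumes "0 < t" "t < 1/2" shows "isCont f0 t"
proof (cases "t = 1/3")
  case True
  let ?A = "\<lambda>t::real. min (2/(3*t)) (2/(3*(1-2*t)))"
  let ?B = "\<lambda>t::real. max (2/(3*t)) (2/(3*(1-2*t)))"
  have "eventually (\<lambda>t. t \<in> {0<..<1/2}) (at (1/3::real))"
    by (rule eventually_at_in_open') auto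
  then have near: "eventually (\<lambda>t. ?A t \<le> f0 t \<and> f0 t \<le> ?B t) (at (1/3::real))"
    by (rule eventually_mono) (use f0_between in auto)
  have "(?A \<longlongrightarrow> ?A (1/3)) (at (1/3))" "(?B \<longlongrightarrow> ?B (1/3)) (at (1/3))"
    by (intro tendsto_intros; simp)+
  then have "(f0 \<longlongrightarrow> 2) (at (1/3))"
    by (intro tendsto_sandwich[of ?A f0 _ ?B 2]) (use near in \<open>auto elim: eventually_mono\<close>)
  then show ?thesis unfolding True by (simp add: isCont_def)
next
  case False
  then show ?thesis using f0_has_real_derivative[OF assms] DERIV_isCont by blast
qed

lemma continuous_on_f0: "{a..b} \<subseteq> {0<..<1/2} \<Longrightarrow> continuous_on {a..b} f0"
  by (intro continuous_at_imp_continuous_on ballI isCont_f0) auto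

lemma continuous_on_f0_numer: "{a..b} \<subseteq> {0<..<1/2} \<Longrightarrow> continuous_on {a..b} f0_numer"
  by (intro continuous_at_imp_continuous_on ballI DERIV_isCont[OF f0_numer_has_real_derivative])
     auto

lemma f0_numer_increasing_below_quarter:
  assumes "0 < a" "a < b" "b \<le> 1/4" shows "f0_numer a < f0_numer b"
proof (rule DERIV_pos_imp_increasing_open[OF assms(2)])
  fix x assume x: "a < x" "x < b"
  have "0 < (3*x - 1) * (4*x - 1) / (x * (1 - 2*x))\<^sup>2"
    using x assms by (intro divide_pos_pos mult_neg_neg) auto
  then show "\<exists>y. DERIV f0_numer x :> y \<and> 0 < y"
    using f0_numer_has_real_derivative[of x] x assms by auto
qed (use assms in \<open>intro continuous_on_f0_numer; auto\<close>)

lemma f0_numer_decreasing_quarter_third: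
  assumes "1/4 \<le> a" "a < b" "b \<le> 1/3" shows "f0_numer b < f0_numer a"
proof (rule DERIV_neg_imp_decreasing_open[OF assms(2)])
  fix x assume x: "a < x" "x < b"
  have "(3*x - 1) * (4*x - 1) < 0" using x assms by (intro mult_neg_pos) auto
  then have "(3*x - 1) * (4*x - 1) / (x * (1 - 2*x))\<^sup>2 < 0"
    using x assms by (intro divide_neg_pos) auto
  then show "\<exists>y. DERIV f0_numer x :> y \<and> y < 0"
    using f0_numer_has_real_derivative[of x] x assms by auto
qed (use assms in \<open>intro continuous_on_f0_numer; auto\<close>)

lemma f0_numer_increasing_above_third:
  assumes "1/3 \<le> a" "a < b" "b < 1/2" shows "f0_numer a < f0_numer b"
proof (rule DERIV_pos_imp_increasing_open[OF assms(2)])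
  fix x assume x: "a < x" "x < b"
  have "0 < (3*x - 1) * (4*x - 1) / (x * (1 - 2*x))\<^sup>2"
    using x assms by (intro divide_pos_pos mult_pos_pos) auto
  then show "\<exists>y. DERIV f0_numer x :> y \<and> 0 < y"
    using f0_numer_has_real_derivative[of x] x assms by auto
qed (use assms in \<open>intro continuous_on_f0_numer; auto\<close>)

lemma f0_numer_one_third: "f0_numer (1/3) = 0"
  by (simp add: f0_numer_def log_ratio_def)

lemma f0_numer_pos_above_quarter: "1/4 \<le> t \<Longrightarrow> t < 1/2 \<Longrightarrow> t \<noteq> 1/3 \<Longrightarrow> 0 < f0_numer t"
  using f0_numer_decreasing_quarter_third[of t "1/3"] f0_numer_increasing_above_third[of "1/3" t]
    f0_numer_one_third
  by (cases "t < 1/3") auto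

lemma f0_numer_neg_at_hundredth: "f0_numer (1/100) < 0"
proof -
  have "ln (49 / 50) - ln (1 / 100) = ln ((49/50) / (1/100::real))"
    by (subst ln_div) auto
  then have ratio: "log_ratio (1/100) = ln 98" by (simp add: log_ratio_def)
  have "ln 98 = 2 * ln (sqrt 98)" by (simp add: ln_sqrt)
  also have "\<dots> \<le> 2 * (sqrt 98 - 1)" using ln_le_minus_one[of "sqrt 98"] by simp
  also have "sqrt 98 < 10" by (rule real_less_lsqrt) auto
  then have "2 * (sqrt 98 - 1) < (18::real)" by simp
  finally have "ln 98 < (18::real)" .
  then show ?thesis unfolding f0_numer_def ratio by simp
qed

lemma f0_numer_sign_change:
  obtains z where "1/100 < z" "z < 1/4"
    "\<And>t. 0 < t \<Longrightarrow> t < z \<Longrightarrow> f0_numer t < 0"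
    "\<And>t. z < t \<Longrightarrow> t < 1/2 \<Longrightarrow> t \<noteq> 1/3 \<Longrightarrow> 0 < f0_numer t"
proof -
  have quarter: "0 < f0_numer (1/4)" using f0_numer_pos_above_quarter by simp
  have "continuous_on {1/100..1/4} f0_numer" by (rule continuous_on_f0_numer) auto
  then obtain z where z: "1/100 \<le> z" "z \<le> 1/4" "f0_numer z = 0"
    using IVT'[of f0_numer "1/100" 0 "1/4"] f0_numer_neg_at_hundredth quarter by auto
  have z1: "z < 1/4" using z quarter by (cases "z = 1/4") auto
  have z0: "1/100 < z" using z f0_numer_neg_at_hundredth by (cases "z = 1/100") auto
  show thesis
  proof (rule that[OF z0 z1])
    show "f0_numer t < 0" if "0 < t" "t < z" for t
      using f0_numer_increasing_below_quarter[of t z] that z z1 by auto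
    show "0 < f0_numer t" if "z < t" "t < 1/2" "t \<noteq> 1/3" for t
      using f0_numer_increasing_below_quarter[of z t] f0_numer_pos_above_quarter[of t] that z z0
      by (cases "t < 1/4") auto
  qed
qed

text \<open>At 1/3, where the formula for f0' is unavailable, continuity bridges the two sides.\<close>
lemma f0_unimodal:
  obtains z where "1/100 < z" "z < 1/4"
    "\<And>a b. 0 < a \<Longrightarrow> a < b \<Longrightarrow> b \<le> z \<Longrightarrow> f0 b < f0 a"
    "\<And>a b. z \<le> a \<Longrightarrow> a < b \<Longrightarrow> b < 1/2 \<Longrightarrow> f0 a < f0 b"
proof -
  obtain z where z: "1/100 < z" "z < 1/4"
    and neg: "\<And>t. 0 < t \<Longrightarrow> t < z \<Longrightarrow> f0_numer t < 0"
    and pos: "\<And>t. z < t \<Longrightarrow> t < 1/2 \<Longrightarrow> t \<noteq> 1/3 \<Longrightarrow> 0 < f0_numer t"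
    using f0_numer_sign_change by blast
  have dec: "f0 b < f0 a" if ab: "0 < a" "a < b" "b \<le> z" for a b
  proof (rule DERIV_neg_imp_decreasing_open[OF ab(2)])
    fix x assume x: "a < x" "x < b"
    have "2/3 * f0_numer x / (1 - 3*x)\<^sup>2 < 0"
      using x ab z neg[of x] by (intro divide_neg_pos) auto
    then show "\<exists>y. DERIV f0 x :> y \<and> y < 0"
      using f0_has_real_derivative[of x] x ab z by auto
  qed (use ab z in \<open>intro continuous_on_f0; auto\<close>)
  have inc_piece: "f0 a < f0 b" if ab: "z \<le> a" "a < b" "b < 1/2" "b \<le> 1/3 \<or> 1/3 \<le> a" for a b
  proof (rule DERIV_pos_imp_increasing_open[OF ab(2)])
    fix x assume x: "a < x" "x < b"
    have x3: "x \<noteq> 1/3" "0 < x" using x ab z by auto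
    have "0 < 2/3 * f0_numer x / (1 - 3*x)\<^sup>2"
      using x ab x3 pos[of x] by (intro divide_pos_pos) auto
    then show "\<exists>y. DERIV f0 x :> y \<and> 0 < y"
      using f0_has_real_derivative[of x] x ab x3 by auto
  qed (use ab z in \<open>intro continuous_on_f0; auto\<close>)
  have inc: "f0 a < f0 b" if ab: "z \<le> a" "a < b" "b < 1/2" for a b
  proof (cases "b \<le> 1/3 \<or> 1/3 \<le> a")
    case False
    then show ?thesis
      using inc_piece[of a "1/3"] inc_piece[of "1/3" b] ab z by fastforce
  qed (use inc_piece ab in blast)
  show thesis by (rule that[OF z dec inc])
qed

lemma m0_unimodal:
  "1/100 < m0 \<and> m0 < 1/4 \<and>
   (\<forall>a b. 0 < a \<and> a < b \<and> b \<le> m0 \<longrightarrow> f0 b < f0 a) \<and>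
   (\<forall>a b. m0 \<le> a \<and> a < b \<and> b < 1/2 \<longrightarrow> f0 a < f0 b)"
proof -
  obtain z where z: "1/100 < z" "z < 1/4"
    and dec: "\<And>a b. 0 < a \<Longrightarrow> a < b \<Longrightarrow> b \<le> z \<Longrightarrow> f0 b < f0 a"
    and inc: "\<And>a b. z \<le> a \<Longrightarrow> a < b \<Longrightarrow> b < 1/2 \<Longrightarrow> f0 a < f0 b"
    using f0_unimodal by blast
  have min: "f0 z < f0 t" if "0 < t" "t < 1/2" "t \<noteq> z" for t
    using dec[of t z] inc[of z t] that by (cases t z rule: linorder_cases) auto
  have "m0 = z"
    unfolding m0_def
  proof (rule the_equality)
    show "z \<in> {0<..<1/2} \<and> (\<forall>s\<in>{0<..<1/2}. f0 z \<le> f0 s)"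
      using z min by (force simp: less_imp_le)
  next
    fix t assume t: "t \<in> {0<..<1/2} \<and> (\<forall>s\<in>{0<..<1/2}. f0 t \<le> f0 s)"
    then have "f0 t \<le> f0 z" using z by auto
    then show "t = z" using min[of t] t by force
  qed
  then show ?thesis using z dec inc by blast
qed

lemma m0_bounds: "1/100 < m0" "m0 < 1/4"
  using m0_unimodal by auto

lemma f0_strict_antimono_upto_m0: "0 < a \<Longrightarrow> a < b \<Longrightarrow> b \<le> m0 \<Longrightarrow> f0 b < f0 a"
  using m0_unimodal by blast

lemma f0_strict_mono_from_m0: "m0 \<le> a \<Longrightarrow> a < b \<Longrightarrow> b < 1/2 \<Longrightarrow> f0 a < f0 b"
  using m0_unimodal by blast

lemma beta3_less_2: "beta3 < 2"
  using f0_strict_mono_from_m0[of m0 "1/3"] m0_bounds by (simp add: beta3_def)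

lemma beta3_pos: "0 < beta3"
  using f0_pos[of m0] m0_bounds by (simp add: beta3_def)

lemma f0_tendsto_at_top_at_0: "filterlim f0 at_top (at_right 0)"
proof -
  have ev: "\<forall>\<^sub>F t in at_right 0. 2 / (3 * (1 - 3*t)) * ln ((1 - 2*t) / t) = f0 t"
    by (rule eventually_at_rightI[where b="1/3"]) (auto simp: f0_def)
  have "filterlim (\<lambda>t::real. 2 / (3 * (1 - 3*t)) * ln ((1 - 2*t) / t)) at_top (at_right 0)"
    by real_asymp
  with filterlim_cong[OF refl refl ev] show ?thesis by simp
qed

lemma f0_tendsto_at_top_at_half: "filterlim f0 at_top (at_left (1/2))"
proof -
  have ev: "\<forall>\<^sub>F t in at_left (1/2). 2 / (3 * (1 - 3*t)) * ln ((1 - 2*t) / t) = f0 t"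
    by (rule eventually_at_leftI[where a="1/3"]) (auto simp: f0_def)
  have "filterlim (\<lambda>t::real. 2 / (3 * (1 - 3*t)) * ln ((1 - 2*t) / t)) at_top (at_left (1/2))"
    by real_asymp
  with filterlim_cong[OF refl refl ev] show ?thesis by simp
qed

lemma f0_exceeds_near_0: "\<exists>t. 0 < t \<and> t < m0 \<and> b < f0 t"
proof -
  have "\<forall>\<^sub>F t in at_right 0. b < f0 t"
    using f0_tendsto_at_top_at_0 by (simp add: filterlim_at_top_dense)
  moreover have "\<forall>\<^sub>F t in at_right 0. 0 < t \<and> t < m0"
    using m0_bounds by (intro eventually_at_rightI[where b=m0]) auto
  ultimately have "\<forall>\<^sub>F t in at_right 0. b < f0 t \<and> 0 < t \<and> t < m0" by (rule eventually_conj)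
  from eventually_happens'[OF _ this] show ?thesis by auto
qed

lemma f0_exceeds_near_half: "\<exists>t. m0 < t \<and> t < 1/2 \<and> b < f0 t"
proof -
  have "\<forall>\<^sub>F t in at_left (1/2). b < f0 t"
    using f0_tendsto_at_top_at_half by (simp add: filterlim_at_top_dense)
  moreover have "\<forall>\<^sub>F t in at_left (1/2). m0 < t \<and> t < 1/2"
    using m0_bounds by (intro eventually_at_leftI[where a=m0]) auto
  ultimately have "\<forall>\<^sub>F t in at_left (1/2). b < f0 t \<and> m0 < t \<and> t < 1/2" by (rule eventually_conj)
  from eventually_happens'[OF _ this] show ?thesis by auto
qed

lemma p_beta:
  assumes "beta3 < b" shows "0 < p_beta b" "p_beta b < m0" "f0 (p_beta b) = b"
proof -
  obtain t1 where t1: "0 < t1" "t1 < m0" "b < f0 t1" using f0_exceeds_near_0 by blast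
  have "continuous_on {t1..m0} f0" using t1 m0_bounds by (intro continuous_on_f0) auto
  then obtain x where x: "t1 \<le> x" "x \<le> m0" "f0 x = b"
    using IVT2'[of f0 m0 b t1] t1 assms by (auto simp: beta3_def)
  have xm: "x < m0" using x assms by (cases "x = m0") (auto simp: beta3_def)
  have "p_beta b = x" unfolding p_beta_def
  proof (rule the_equality)
    fix t assume t: "0 < t \<and> t < m0 \<and> f0 t = b"
    show "t = x"
      using f0_strict_antimono_upto_m0[of t x] f0_strict_antimono_upto_m0[of x t] t x xm t1
      by (cases t x rule: linorder_cases) auto
  qed (use x xm t1 in auto)
  then show "0 < p_beta b" "p_beta b < m0" "f0 (p_beta b) = b" using x xm t1 by auto
qed

lemma q_beta:
  assumes "beta3 < b" shows "m0 < q_beta b" "q_beta b < 1/2" "f0 (q_beta b) = b"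
proof -
  obtain t1 where t1: "m0 < t1" "t1 < 1/2" "b < f0 t1" using f0_exceeds_near_half by blast
  have "continuous_on {m0..t1} f0" using t1 m0_bounds by (intro continuous_on_f0) auto
  then obtain x where x: "m0 \<le> x" "x \<le> t1" "f0 x = b"
    using IVT'[of f0 m0 b t1] t1 assms by (auto simp: beta3_def)
  have xm: "m0 < x" using x assms by (cases "x = m0") (auto simp: beta3_def)
  have "q_beta b = x" unfolding q_beta_def
  proof (rule the_equality)
    fix t assume t: "m0 < t \<and> t < 1/2 \<and> f0 t = b"
    show "t = x"
      using f0_strict_mono_from_m0[of t x] f0_strict_mono_from_m0[of x t] t x xm t1
      by (cases t x rule: linorder_cases) auto
  qed (use x xm t1 in auto)
  then show "m0 < q_beta b" "q_beta b < 1/2" "f0 (q_beta b) = b" using x xm t1 by auto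
qed

lemma f0_eq_iff_p_beta_or_q_beta:
  assumes "beta3 < b" "0 < t" "t < 1/2"
  shows "f0 t = b \<longleftrightarrow> t = p_beta b \<or> t = q_beta b"
proof
  assume f: "f0 t = b"
  note p = p_beta[OF assms(1)] and q = q_beta[OF assms(1)]
  have "t < m0 \<or> m0 < t" using f assms by (cases t m0 rule: linorder_cases) (auto simp: beta3_def)
  then show "t = p_beta b \<or> t = q_beta b"
  proof
    assume "t < m0"
    then show ?thesis
      using f0_strict_antimono_upto_m0[of t "p_beta b"] f0_strict_antimono_upto_m0[of "p_beta b" t]
        p assms f
      by (cases t "p_beta b" rule: linorder_cases) auto
  next
    assume "m0 < t"
    then show ?thesis
      using f0_strict_mono_from_m0[of t "q_beta b"] f0_strict_mono_from_m0[of "q_beta b" t]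
        q assms f
      by (cases t "q_beta b" rule: linorder_cases) auto
  qed
qed (use p_beta[OF assms(1)] q_beta[OF assms(1)] in auto)

lemma f0_less_between:
  assumes "beta3 < b" "p_beta b < t" "t < q_beta b" shows "f0 t < b"
proof -
  note p = p_beta[OF assms(1)] and q = q_beta[OF assms(1)]
  consider "t < m0" | "t = m0" | "m0 < t" by linarith
  then show ?thesis
  proof cases
    case 1 then show ?thesis using f0_strict_antimono_upto_m0[of "p_beta b" t] p assms by auto
  next
    case 2 then show ?thesis using assms by (simp add: beta3_def)
  next
    case 3 then show ?thesis using f0_strict_mono_from_m0[of t "q_beta b"] q assms by auto
  qed
qed

lemma f0_greater_above_q_beta:
  assumes "beta3 < b" "q_beta b < t" "t < 1/2" shows "b < f0 t"
  using f0_strict_mono_from_m0[of "q_beta b" t] q_beta[OF assms(1)] assms by auto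

lemma q_beta_2: "q_beta 2 = 1/3"
  using f0_eq_iff_p_beta_or_q_beta[of 2 "1/3"] beta3_less_2 p_beta[of 2] m0_bounds by auto

lemma q_beta_ge_one_third: assumes "2 \<le> b" "beta3 < b" shows "1/3 \<le> q_beta b"
proof (rule ccontr)
  assume "\<not> 1/3 \<le> q_beta b"
  then have "b < f0 (1/3)" using f0_greater_above_q_beta[of b "1/3"] assms by auto
  then show False using assms by simp
qed

lemma q_beta_gt_one_third: assumes "2 < b" "beta3 < b" shows "1/3 < q_beta b"
proof -
  have "q_beta b \<noteq> 1/3"
  proof
    assume "q_beta b = 1/3"
    then have "f0 (1/3) = b" using q_beta(3)[OF assms(2)] by metis
    then show False using assms by simp
  qed
  then show ?thesis using q_beta_ge_one_third[of b] assms by auto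
qed

lemma q_beta_less_one_third: assumes "b < 2" "beta3 < b" shows "q_beta b < 1/3"
proof (rule ccontr)
  assume "\<not> q_beta b < 1/3"
  then consider "q_beta b = 1/3" | "1/3 < q_beta b" by linarith
  then show False
  proof cases
    case 1
    then have "f0 (1/3) = b" using q_beta(3)[OF assms(2)] by metis
    then show False using assms by simp
  next
    case 2
    then have "f0 (1/3) < b"
      using f0_less_between[of b "1/3"] p_beta[OF assms(2)] m0_bounds assms by auto
    then show False using assms by simp
  qed
qed

text \<open>Since G'' t = -3/2 + 1/(beta t), the sign of q_beta f0 q_beta - 2/3 decides whether the
  saddle sigma is a transversal minimum or maximum of F.\<close>
lemma mult_f0_less_two_thirds: assumes "0 < t" "t < 1/3" shows "t * f0 t < 2/3"
proof -
  define y where "y = (1 - 2*t) / t"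
  have y: "0 < y" "y \<noteq> 1" "y - 1 = (1 - 3*t) / t" using assms by (auto simp: y_def field_simps)
  have "t * f0 t = 2 * t / (3 * (1 - 3*t)) * ln y"
    using assms by (simp add: f0_eq_log_ratio log_ratio_def y_def ln_div)
  also have "\<dots> < 2 * t / (3 * (1 - 3*t)) * (y - 1)"
    using ln_less_minus_one[OF y(1,2)] assms by (intro mult_strict_left_mono) auto
  also have "\<dots> = 2/3" using assms by (simp add: y(3) field_simps)
  finally show ?thesis .
qed

lemma mult_f0_greater_two_thirds: assumes "1/3 < t" "t < 1/2" shows "2/3 < t * f0 t"
proof -
  define y where "y = (1 - 2*t) / t"
  have y: "0 < y" "y \<noteq> 1" "y - 1 = (1 - 3*t) / t" using assms by (auto simp: y_def field_simps)
  have "2/3 = 2 * t / (3 * (1 - 3*t)) * (y - 1)" using assms by (simp add: y(3) field_simps)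
  also have "\<dots> < 2 * t / (3 * (1 - 3*t)) * ln y"
    using ln_less_minus_one[OF y(1,2)] assms
    by (intro mult_strict_left_mono_neg) (auto simp: divide_pos_neg)
  also have "\<dots> = t * f0 t"
    using assms by (simp add: f0_eq_log_ratio log_ratio_def y_def ln_div)
  finally show ?thesis .
qed

section \<open>The free energy on the symmetry axes\<close>

definition axis_pt :: "nat \<Rightarrow> real \<Rightarrow> real \<times> real" where
  "axis_pt i a = (if i = 0 then (a, a) else if i = 1 then (1 - 2*a, a) else (a, 1 - 2*a))"

definition phi :: "real \<Rightarrow> real \<Rightarrow> real" where
  "phi b a = 2 * G b a + G b (1 - 2*a)"

lemma mpt_eq_axis_pt: "mpt b i = axis_pt i (p_beta b)"
  by (simp add: mpt_def axis_pt_def Let_def)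

lemma sigma_eq_axis_pt: "sigma b i = axis_pt i (q_beta b)"
  by (simp add: sigma_def axis_pt_def Let_def)

lemma p_pt_eq_axis_pt: "i < 3 \<Longrightarrow> p_pt = axis_pt i (1/3)"
  by (auto simp: p_pt_def axis_pt_def numeral_3_eq_3 less_Suc_eq)

lemma coord_axis_pt: "i < 3 \<Longrightarrow> k < 3 \<Longrightarrow> coord (axis_pt i a) k = (if k = i then 1 - 2*a else a)"
  by (auto simp: axis_pt_def coord_def numeral_3_eq_3 less_Suc_eq)

lemma axis_pt_in_Xi: "i < 3 \<Longrightarrow> 0 \<le> a \<Longrightarrow> a \<le> 1/2 \<Longrightarrow> axis_pt i a \<in> Xi"
  by (auto simp: Xi_iff_coord_nonneg coord_axis_pt)

lemma F_axis_pt: "i < 3 \<Longrightarrow> F b (axis_pt i a) = phi b a + 1/4"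
  by (auto simp: F_eq_sum_G phi_def coord_axis_pt numeral_3_eq_3 less_Suc_eq)

lemma H_eq_phi: "H b = phi b (q_beta b) + 1/4"
  by (simp add: H_def sigma_eq_axis_pt F_axis_pt)

lemma F_sigma: "i < 3 \<Longrightarrow> F b (sigma b i) = H b"
  by (simp add: sigma_eq_axis_pt F_axis_pt H_eq_phi)

lemma axis_pt_eqI:
  assumes "{i, j, k} = {0, 1, 2::nat}" "coord x i = a" "coord x j = a"
  shows "x = axis_pt k a"
proof -
  note ijk = indices3[OF assms(1)]
  have "coord x k = 1 - 2*a" using coord_sum_indices3[OF assms(1), of x] assms by simp
  then have "coord x l = coord (axis_pt k a) l" if "l < 3" for l
    using indices3_cases[OF assms(1) that] assms ijk coord_axis_pt[OF ijk(3) that] by auto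
  then show ?thesis by (intro coord_eqI) auto
qed

lemma continuous_on_axis_pt: "continuous_on S (axis_pt i)"
  unfolding axis_pt_def by (cases "i = 0"; cases "i = 1") (auto intro!: continuous_intros)

text \<open>On the axes, G' b a - G' b (1 - 2a) factors through f0; this is why f0 governs the
  critical points.\<close>
lemma G'_axis_diff:
  assumes "0 < a" "a < 1/2" "0 < b"
  shows "G' b a - G' b (1 - 2*a) = 3/2 * (1 - 3*a) * (1 - f0 a / b)"
proof (cases "a = 1/3")
  case False
  have "ln (3*a) = ln 3 + ln a" "ln (3 * (1 - 2*a)) = ln 3 + ln (1 - 2*a)"
    using assms by (intro ln_mult_pos; simp)+
  then have "ln (3 * (1 - 2*a)) = ln (3*a) + log_ratio a" by (simp add: log_ratio_def)
  then have "G' b a - G' b (1 - 2*a) = 3/2 * (1 - 3*a) - log_ratio a / b"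
    unfolding G'_def using assms by (simp add: field_simps)
  moreover have "3/2 * (1 - 3*a) * f0 a = log_ratio a"
    using assms False by (simp add: f0_eq_log_ratio)
  ultimately show ?thesis using assms by (simp add: field_simps)
next
  case True
  then show ?thesis unfolding True by (simp add: G'_def)
qed

lemma phi_has_real_derivative:
  assumes "0 < a" "a < 1/2" "0 < b"
  shows "(phi b has_real_derivative (3 * ((1 - 3*a) * (1 - f0 a / b)))) (at a)"
proof -
  have "(phi b has_real_derivative (2 * G' b a + G' b (1 - 2*a) * (0 - 2 * 1))) (at a)"
    unfolding phi_def[abs_def] using assms
    by (auto intro!: derivative_eq_intros G_has_real_derivative
        DERIV_chain2[where f="G b", OF G_has_real_derivative])
  moreover have "2 * G' b a + G' b (1 - 2*a) * (0 - 2 * 1) = 3 * ((1 - 3*a) * (1 - f0 a / b))"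
    using G'_axis_diff[OF assms] by (simp add: algebra_simps)
  ultimately show ?thesis by simp
qed

lemma continuous_on_phi: "0 \<le> a1 \<Longrightarrow> a2 \<le> 1/2 \<Longrightarrow> continuous_on {a1..a2} (phi b)"
  unfolding phi_def[abs_def]
  by (intro continuous_intros continuous_on_compose2[OF continuous_on_G]) auto

lemma phi_strict_mono_if_deriv_pos:
  assumes "0 < a1" "a1 < a2" "a2 \<le> 1/2" "0 < b"
    and "\<And>a. a1 < a \<Longrightarrow> a < a2 \<Longrightarrow> 0 < (1 - 3*a) * (1 - f0 a / b)"
  shows "phi b a1 < phi b a2"
proof (rule DERIV_pos_imp_increasing_open[OF assms(2)])
  fix x assume x: "a1 < x" "x < a2"
  have "0 < 3 * ((1 - 3*x) * (1 - f0 x / b))" using assms(5)[OF x] by linarith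
  then show "\<exists>y. DERIV (phi b) x :> y \<and> 0 < y"
    using phi_has_real_derivative[of x b] x assms by auto
qed (use assms in \<open>intro continuous_on_phi; auto\<close>)

lemma phi_strict_antimono_if_deriv_neg:
  assumes "0 < a1" "a1 < a2" "a2 \<le> 1/2" "0 < b"
    and "\<And>a. a1 < a \<Longrightarrow> a < a2 \<Longrightarrow> (1 - 3*a) * (1 - f0 a / b) < 0"
  shows "phi b a2 < phi b a1"
proof (rule DERIV_neg_imp_decreasing_open[OF assms(2)])
  fix x assume x: "a1 < x" "x < a2"
  have "3 * ((1 - 3*x) * (1 - f0 x / b)) < 0" using assms(5)[OF x] by linarith
  then show "\<exists>y. DERIV (phi b) x :> y \<and> y < 0"
    using phi_has_real_derivative[of x b] x assms by auto
qed (use assms in \<open>intro continuous_on_phi; auto\<close>)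

lemma one_minus_div_pos_iff: "0 < (b::real) \<Longrightarrow> 0 < 1 - f / b \<longleftrightarrow> f < b"
  by (simp add: field_simps)

lemma one_minus_div_neg_iff: "0 < (b::real) \<Longrightarrow> 1 - f / b < 0 \<longleftrightarrow> b < f"
  by (simp add: field_simps)

lemma phi_increasing_p_to_q:
  assumes "beta3 < b" "p_beta b \<le> a1" "a1 < a2" "a2 \<le> q_beta b" "a2 \<le> 1/3"
  shows "phi b a1 < phi b a2"
  using assms p_beta[OF assms(1)] beta3_pos
  by (intro phi_strict_mono_if_deriv_pos) (auto intro!: mult_pos_pos f0_less_between
      simp: one_minus_div_pos_iff)

lemma phi_decreasing_q_to_third:
  assumes "beta3 < b" "q_beta b \<le> a1" "a1 < a2" "a2 \<le> 1/3"
  shows "phi b a2 < phi b a1"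
  using assms q_beta[OF assms(1)] beta3_pos m0_bounds
  by (intro phi_strict_antimono_if_deriv_neg) (auto intro!: mult_pos_neg f0_greater_above_q_beta
      simp: one_minus_div_neg_iff)

lemma phi_decreasing_third_to_q:
  assumes "beta3 < b" "1/3 \<le> a1" "a1 < a2" "a2 \<le> q_beta b"
  shows "phi b a2 < phi b a1"
  using assms q_beta[OF assms(1)] p_beta[OF assms(1)] beta3_pos m0_bounds
  by (intro phi_strict_antimono_if_deriv_neg) (auto intro!: mult_neg_pos f0_less_between
      simp: one_minus_div_pos_iff)

lemma phi_increasing_beyond_q:
  assumes "beta3 < b" "q_beta b \<le> a1" "1/3 \<le> a1" "a1 < a2" "a2 \<le> 1/2"
  shows "phi b a1 < phi b a2"
  using assms q_beta[OF assms(1)] beta3_pos m0_bounds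
  by (intro phi_strict_mono_if_deriv_pos) (auto intro!: mult_neg_neg f0_greater_above_q_beta
      simp: one_minus_div_neg_iff)

section \<open>Transversal behaviour at the axes\<close>

lemma ln_ratio_lower:
  assumes "0 < (x::real)" "x < 1" shows "2 * x < ln (1 + x) - ln (1 - x)"
proof -
  let ?h = "\<lambda>x::real. ln (1 + x) - ln (1 - x) - 2 * x"
  have "?h 0 < ?h x"
  proof (rule DERIV_pos_imp_increasing_open[OF assms(1)])
    fix y :: real assume y: "0 < y" "y < x"
    then have y1: "y < 1" using assms by simp
    have "y * y < 1 * 1" using y y1 by (intro mult_strict_mono) auto
    then have nz: "1 - y * y \<noteq> 0" "1 + y \<noteq> 0" "1 - y \<noteq> 0" using y y1 by auto
    have "(?h has_real_derivative (1 / (1 + y) + 1 / (1 - y) - 2)) (at y)"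
      using y y1 nz by (auto intro!: derivative_eq_intros simp: field_simps)
    moreover have "1 / (1 + y) + 1 / (1 - y) - 2 = 2 * y\<^sup>2 / ((1 + y) * (1 - y))"
      using nz by (simp add: field_simps power2_eq_square)
    moreover have "0 < 2 * y\<^sup>2 / ((1 + y) * (1 - y))" using y y1 by simp
    ultimately show "\<exists>d. DERIV ?h y :> d \<and> 0 < d" by auto
  qed (use assms in \<open>intro continuous_intros continuous_on_ln; auto\<close>)
  then show ?thesis by simp
qed

lemma ln_ratio_upper:
  assumes "0 \<le> (x::real)" "x < 1" shows "ln (1 + x) - ln (1 - x) \<le> x + x / (1 - x)"
proof -
  have "ln (1 + x) \<le> x" using ln_le_minus_one[of "1 + x"] assms by simp
  moreover have "ln (1 / (1 - x)) \<le> 1 / (1 - x) - 1"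
    using ln_le_minus_one[of "1 / (1 - x)"] assms by simp
  moreover have "ln (1 / (1 - x)) = - ln (1 - x)" using assms by (simp add: ln_div)
  moreover have "1 / (1 - x) - 1 = x / (1 - x)" using assms by (simp add: field_simps)
  ultimately show ?thesis by linarith
qed

lemma G_sym_sum_has_real_derivative:
  assumes "0 < c" "0 < u" "u < c" "0 < b"
  shows "((\<lambda>u. G b (c + u) + G b (c - u)) has_real_derivative
     (- 3 * u + (ln (1 + u/c) - ln (1 - u/c)) / b)) (at u)"
proof -
  have d1: "(G b has_real_derivative G' b (c + u)) (at (c + u))"
    using G_has_real_derivative assms by auto
  have d2: "(G b has_real_derivative G' b (c - u)) (at (c - u))"
    using G_has_real_derivative assms by auto
  have e1: "((\<lambda>u. c + u) has_real_derivative 1) (at u)" by (auto intro!: derivative_eq_intros)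
  have e2: "((\<lambda>u. c - u) has_real_derivative -1) (at u)" by (auto intro!: derivative_eq_intros)
  have "((\<lambda>u. G b (c + u) + G b (c - u)) has_real_derivative
      (G' b (c + u) * 1 + G' b (c - u) * -1)) (at u)"
    by (rule DERIV_add[OF DERIV_chain2[where f="G b", OF d1 e1]
          DERIV_chain2[where f="G b", OF d2 e2]])
  moreover have "G' b (c + u) * 1 + G' b (c - u) * -1 = - 3 * u + (ln (1 + u/c) - ln (1 - u/c)) / b"
  proof -
    have "3 * (c + u) = (3*c) * (1 + u/c)" using assms by (simp add: field_simps)
    then have l1: "ln (3 * (c + u)) = ln (3*c) + ln (1 + u/c)"
      using assms by (simp only:) (rule ln_mult_pos, auto simp: field_simps)
    have "3 * (c - u) = (3*c) * (1 - u/c)" using assms by (simp add: field_simps)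
    then have l2: "ln (3 * (c - u)) = ln (3*c) + ln (1 - u/c)"
      using assms by (simp only:) (rule ln_mult_pos, auto simp: field_simps)
    have "G' b (c + u) * 1 + G' b (c - u) * -1
        = - 3 * u + (ln (3 * (c + u)) - ln (3 * (c - u))) / b"
      unfolding G'_def using assms by (simp add: field_simps)
    also have "\<dots> = - 3 * u + (ln (1 + u/c) - ln (1 - u/c)) / b" unfolding l1 l2 by simp
    finally show ?thesis .
  qed
  ultimately show ?thesis by simp
qed

lemma continuous_on_G_sym_sum:
  assumes "0 \<le> s" "s \<le> c" shows "continuous_on {0..s} (\<lambda>u. G b (c + u) + G b (c - u))"
  using assms by (intro continuous_intros continuous_on_compose2[OF continuous_on_G]) auto

lemma G_sym_sum_gt:
  assumes "0 < c" "0 < b" "c * b < 2/3" "0 < s" "s \<le> c"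
  shows "2 * G b c < G b (c + s) + G b (c - s)"
proof -
  have "G b (c + 0) + G b (c - 0) < G b (c + s) + G b (c - s)"
  proof (rule DERIV_pos_imp_increasing_open[where f="\<lambda>u. G b (c + u) + G b (c - u)", OF assms(4)])
    fix u assume u: "0 < u" "u < s"
    have x: "0 < u/c" "u/c < 1" using u assms by auto
    have "2 * (u/c) / b < (ln (1 + u/c) - ln (1 - u/c)) / b"
      using ln_ratio_lower[OF x] assms by (intro divide_strict_right_mono) auto
    moreover have "3 * u < 2 * (u/c) / b"
    proof -
      have "3 * (c * b) < 2" using assms by simp
      then have "3 * u * (c * b) < 2 * u" using u by simp
      then show ?thesis using assms by (simp add: field_simps)
    qed
    ultimately have "0 < - 3 * u + (ln (1 + u/c) - ln (1 - u/c)) / b" by linarith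
    then show "\<exists>y. ((\<lambda>u. G b (c + u) + G b (c - u)) has_real_derivative y) (at u) \<and> 0 < y"
      using G_sym_sum_has_real_derivative[of c u b] u assms by auto
  qed (rule continuous_on_G_sym_sum, use assms in auto)
  then show ?thesis by simp
qed

lemma G_sym_sum_lt:
  assumes "0 < c" "0 < b" "2/3 < c * b"
  shows "\<exists>s0>0. s0 < c \<and> (\<forall>s. 0 < s \<and> s \<le> s0 \<longrightarrow> G b (c + s) + G b (c - s) < 2 * G b c)"
proof -
  define K where "K = 3*c*b"
  have K: "2 < K" using assms by (simp add: K_def)
  text \<open>For 0 < x < (K - 2)/(K - 1) we have x + x/(1 - x) < K x; halving this bound
    also keeps x below 1/2.\<close>
  define x0 where "x0 = (K - 2) / (2 * (K - 1))"
  have x0: "0 < x0" "x0 < 1/2" using K unfolding x0_def by (auto simp: divide_less_eq)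
  have x0': "x0 * (K - 1) < K - 2"
  proof -
    have "K - 2 = x0 * (2 * (K - 1))" using K by (simp add: x0_def)
    then show ?thesis using K x0 by (simp add: algebra_simps)
  qed
  define s0 where "s0 = c * x0"
  have s0: "0 < s0" "s0 < c" using x0 assms by (auto simp: s0_def)
  have "G b (c + s) + G b (c - s) < 2 * G b c" if s: "0 < s" "s \<le> s0" for s
  proof -
    have "G b (c + s) + G b (c - s) < G b (c + 0) + G b (c - 0)"
    proof (rule DERIV_neg_imp_decreasing_open[where f="\<lambda>u. G b (c + u) + G b (c - u)", OF s(1)])
      fix u assume u: "0 < u" "u < s"
      define x where "x = u / c"
      have x: "0 < x" "x < x0" using u s assms by (auto simp: x_def s0_def field_simps)
      have "(ln (1 + x) - ln (1 - x)) / b \<le> (x + x / (1 - x)) / b"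
        using ln_ratio_upper[of x] x x0 assms by (simp add: divide_right_mono)
      moreover have "(x + x / (1 - x)) / b < 3 * u"
      proof -
        have "x * (K - 1) < x0 * (K - 1)" using x K by (intro mult_strict_right_mono) auto
        then have "2 - x < K * (1 - x)" using x0' by (simp add: algebra_simps)
        then have "x * (2 - x) < x * (3*c*b * (1 - x))" using x by (simp add: K_def)
        then have "(x + x / (1 - x)) < 3 * c * b * x" using x x0 by (simp add: field_simps)
        then have "(x + x / (1 - x)) / b < 3 * c * x" using assms by (simp add: field_simps)
        then show ?thesis using assms by (simp add: x_def)
      qed
      ultimately have "- 3 * u + (ln (1 + u/c) - ln (1 - u/c)) / b < 0" unfolding x_def by linarith
      then show "\<exists>y. ((\<lambda>u. G b (c + u) + G b (c - u)) has_real_derivative y) (at u) \<and> y < 0"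
        using G_sym_sum_has_real_derivative[of c u b] u s s0 assms by auto
    qed (rule continuous_on_G_sym_sum, use s s0 assms in auto)
    then show ?thesis by simp
  qed
  then show ?thesis using s0 by blast
qed

section \<open>Connected components of the sublevel set\<close>

lemma connected_component_subset_open_cover:
  assumes "z \<in> A" "open A" "open B" "A \<inter> B = {}" "S \<subseteq> A \<union> B"
  shows "connected_component_set S z \<subseteq> A"
proof (cases "z \<in> S")
  case True
  have "connected_component_set S z \<subseteq> A \<union> B" using assms(5) connected_component_subset by blast
  moreover have "z \<in> connected_component_set S z" using True by simp
  ultimately show ?thesis
    using connectedD[OF connected_connected_component[of S z] assms(2,3)] assms(1,4) by blast
qed (metis connected_component_eq_empty empty_subsetI)

lemma closure_image_atLeastLessThan:
  fixes f :: "real \<Rightarrow> 'a::topological_space"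
  assumes "a1 < a2" "continuous_on {a1..a2} f" "f ` {a1..<a2} \<subseteq> S"
  shows "f a2 \<in> closure S"
proof -
  have "f ` closure {a1..<a2} \<subseteq> closure S"
    using assms closure_subset by (intro image_closure_subset) auto
  then show ?thesis using assms(1) by auto
qed

lemma closure_image_greaterThanAtMost:
  fixes f :: "real \<Rightarrow> 'a::topological_space"
  assumes "a1 < a2" "continuous_on {a1..a2} f" "f ` {a1<..a2} \<subseteq> S"
  shows "f a1 \<in> closure S"
proof -
  have "f ` closure {a1<..a2} \<subseteq> closure S"
    using assms closure_subset by (intro image_closure_subset) auto
  then show ?thesis using assms(1) by auto
qed

lemma W_subset_Xi: "W b \<subseteq> Xi"
  by (auto simp: W_def)

lemma Wc_subset_W: "Wc b i \<subseteq> W b"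
  by (auto simp: Wc_def connected_component_subset)

lemma Wc_eq_component_mpt: "i < 3 \<Longrightarrow> Wc b i = connected_component_set (W b) (mpt b i)"
  by (simp add: Wc_def)

lemma W_relatively_open: assumes "y \<in> W b" shows "\<exists>r>0. ball y r \<inter> Xi \<subseteq> W b"
proof -
  have y: "y \<in> Xi" "F b y < H b" using assms by (auto simp: W_def)
  have "continuous (at y within Xi) (F b)"
    using continuous_on_F y(1) continuous_on_eq_continuous_within by blast
  then obtain r where r: "r > 0" "\<And>x. x \<in> Xi \<Longrightarrow> dist x y < r \<Longrightarrow> dist (F b x) (F b y) < H b - F b y"
    using y unfolding continuous_within_eps_delta by (metis diff_gt_0_iff_gt)
  have "ball y r \<inter> Xi \<subseteq> W b"
  proof
    fix x assume x: "x \<in> ball y r \<inter> Xi"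
    then have "dist (F b x) (F b y) < H b - F b y" using r by (auto simp: dist_commute)
    then show "x \<in> W b" using x by (auto simp: W_def dist_real_def)
  qed
  then show ?thesis using \<open>r > 0\<close> by blast
qed

text \<open>Balls meet the convex set Xi in connected sets, so a component of W that accumulates
  at a point of W absorbs a relative neighbourhood of it.\<close>
lemma component_W_absorbs_ball:
  assumes "y \<in> W b" "y \<in> closure (connected_component_set (W b) z)"
  shows "\<exists>r>0. ball y r \<inter> Xi \<subseteq> connected_component_set (W b) z"
proof -
  obtain r where r: "r > 0" "ball y r \<inter> Xi \<subseteq> W b" using W_relatively_open[OF assms(1)] by blast
  obtain w where w: "w \<in> connected_component_set (W b) z" "dist y w < r"
    using closure_approachableD[OF assms(2) r(1)] by blast
  have "w \<in> Xi" using w(1) connected_component_subset W_subset_Xi by blast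
  then have "ball y r \<inter> Xi \<subseteq> connected_component_set (W b) w"
    using w r by (intro connected_component_maximal convex_connected convex_Int convex_ball
      convex_Xi)
                 (auto simp: dist_commute)
  also have "\<dots> = connected_component_set (W b) z" by (rule connected_component_eq[OF w(1)])
  finally show ?thesis using r by blast
qed

lemma closure_Wc_subset: "closure (Wc b i) \<subseteq> {x \<in> Xi. F b x \<le> H b}"
proof -
  have "closed {x \<in> Xi. F b x \<le> H b}"
    by (rule continuous_on_closed_Collect_le[OF continuous_on_F continuous_on_const closed_Xi])
  moreover have "Wc b i \<subseteq> {x \<in> Xi. F b x \<le> H b}" using Wc_subset_W[of b i] by (auto simp: W_def)
  ultimately show ?thesis by (intro closure_minimal)
qed

lemma axis_segment_in_component:
  assumes "connected I" "\<And>a. a \<in> I \<Longrightarrow> axis_pt i a \<in> W b" "a0 \<in> I" "a \<in> I"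
  shows "axis_pt i a \<in> connected_component_set (W b) (axis_pt i a0)"
proof -
  have "connected (axis_pt i ` I)"
    using assms(1) by (intro connected_continuous_image continuous_on_axis_pt)
  then have "axis_pt i ` I \<subseteq> connected_component_set (W b) (axis_pt i a0)"
    using assms by (intro connected_component_maximal) auto
  then show ?thesis using assms(4) by blast
qed

section \<open>Separation by the dominant coordinate for beta \<ge> 2\<close>

definition dominant :: "nat \<Rightarrow> (real \<times> real) set" where
  "dominant i = {x. \<forall>j<3. j \<noteq> i \<longrightarrow> coord x j < coord x i}"

lemma open_dominant: "open (dominant i)"
proof -
  have "dominant i = (\<Inter>j\<in>{..<3} - {i}. {x. coord x j < coord x i})" by (auto simp: dominant_def)
  moreover have "open {x. coord x j < coord x i}" for j
    by (intro open_Collect_less continuous_on_coord)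
  ultimately show ?thesis by (auto intro!: open_INT)
qed

lemma dominant_disjoint: "i < 3 \<Longrightarrow> j < 3 \<Longrightarrow> i \<noteq> j \<Longrightarrow> dominant i \<inter> dominant j = {}"
  by (force simp: dominant_def)

lemma closure_dominant_subset: "closure (dominant i) \<subseteq> {x. \<forall>j<3. coord x j \<le> coord x i}"
proof (rule closure_minimal)
  have "{x. \<forall>j<3. coord x j \<le> coord x i} = (\<Inter>j<3. {x. coord x j \<le> coord x i})" by auto
  moreover have "closed {x. coord x j \<le> coord x i}" for j
    by (intro closed_Collect_le continuous_on_coord)
  ultimately show "closed {x. \<forall>j<3. coord x j \<le> coord x i}" by (auto intro!: closed_INT)
qed (auto simp: dominant_def less_imp_le)

lemma tie_if_not_dominant:
  assumes "x \<notin> dominant 0" "x \<notin> dominant 1" "x \<notin> dominant 2"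
  obtains i j k where "{i, j, k} = {0, 1, 2::nat}" "coord x i = coord x j" "coord x k \<le> coord x i"
proof -
  have "\<not> (coord x 1 < coord x 0 \<and> coord x 2 < coord x 0)"
       "\<not> (coord x 0 < coord x 1 \<and> coord x 2 < coord x 1)"
       "\<not> (coord x 0 < coord x 2 \<and> coord x 1 < coord x 2)"
    using assms by (auto simp: dominant_def numeral_3_eq_3 less_Suc_eq numeral_2_eq_2)
  then consider "coord x 0 = coord x 1" "coord x 2 \<le> coord x 0"
    | "coord x 0 = coord x 2" "coord x 1 \<le> coord x 0"
    | "coord x 1 = coord x 2" "coord x 0 \<le> coord x 1"
    by linarith
  then show thesis
  proof cases
    case 1 then show ?thesis using that[of 0 1 2] by simp
  next
    case 2 then show ?thesis using that[of 0 2 1] by (simp add: insert_commute)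
  next
    case 3 then show ?thesis using that[of 1 2 0] by (simp add: insert_commute)
  qed
qed

text \<open>Where the two largest coordinates tie, x lies on the axis beyond 1/3, where phi
  is minimal at q_beta b \<ge> 1/3.\<close>
lemma F_ge_H_at_tie:
  assumes "2 \<le> b" "beta3 < b" "x \<in> Xi" "{i, j, k} = {0, 1, 2::nat}"
    and "coord x i = coord x j" "coord x k \<le> coord x i"
  shows "H b \<le> F b x" "F b x = H b \<Longrightarrow> x = sigma b k"
proof -
  define a where "a = coord x i"
  have x: "x = axis_pt k a"
    by (rule axis_pt_eqI[OF assms(4)]) (use assms(5) in \<open>simp_all add: a_def\<close>)
  note k = indices3(3)[OF assms(4)]
  have "coord x k = 1 - 2*a" using coord_axis_pt[OF k k, of a] x by simp
  then have a: "1/3 \<le> a" "a \<le> 1/2"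
    using assms(6) coord_nonneg[OF assms(3) k] by (simp_all add: a_def)
  have "phi b (q_beta b) \<le> phi b a \<and> (phi b a = phi b (q_beta b) \<longrightarrow> a = q_beta b)"
  proof (cases a "q_beta b" rule: linorder_cases)
    case less
    then show ?thesis using phi_decreasing_third_to_q[OF assms(2) a(1) less] by simp
  next
    case greater
    then show ?thesis
      using phi_increasing_beyond_q[OF assms(2) order.refl q_beta_ge_one_third[OF assms(1,2)]
        greater a(2)]
      by simp
  qed simp
  then show "H b \<le> F b x" "F b x = H b \<Longrightarrow> x = sigma b k"
    using x k by (auto simp: H_eq_phi sigma_eq_axis_pt F_axis_pt)
qed

lemma W_subset_dominant:
  assumes "2 \<le> b" "beta3 < b" shows "W b \<subseteq> dominant 0 \<union> dominant 1 \<union> dominant 2"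
proof
  fix x assume x: "x \<in> W b"
  show "x \<in> dominant 0 \<union> dominant 1 \<union> dominant 2"
  proof (rule ccontr)
    assume "x \<notin> dominant 0 \<union> dominant 1 \<union> dominant 2"
    then obtain i j k
      where "{i, j, k} = {0, 1, 2::nat}" "coord x i = coord x j" "coord x k \<le> coord x i"
      using tie_if_not_dominant by blast
    then have "H b \<le> F b x" using F_ge_H_at_tie[OF assms] x by (auto simp: W_def)
    then show False using x by (auto simp: W_def)
  qed
qed

lemma mpt_in_dominant: "beta3 < b \<Longrightarrow> i < 3 \<Longrightarrow> mpt b i \<in> dominant i"
  using p_beta[of b] m0_bounds by (auto simp: dominant_def mpt_eq_axis_pt coord_axis_pt)

lemma component_subset_dominant:
  assumes "2 \<le> b" "beta3 < b" "i < 3" "z \<in> dominant i"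
  shows "connected_component_set (W b) z \<subseteq> dominant i"
proof (rule connected_component_subset_open_cover[OF assms(4) open_dominant])
  let ?B = "\<Union>j\<in>{..<3} - {i}. dominant j"
  show "open ?B" by (auto intro!: open_dominant)
  show "dominant i \<inter> ?B = {}" using dominant_disjoint assms(3) by auto
  show "W b \<subseteq> dominant i \<union> ?B"
    using W_subset_dominant[OF assms(1,2)] assms(3)
    by (auto simp: numeral_3_eq_3 less_Suc_eq numeral_2_eq_2)
qed

lemma Wc_subset_dominant: "2 \<le> b \<Longrightarrow> beta3 < b \<Longrightarrow> i < 3 \<Longrightarrow> Wc b i \<subseteq> dominant i"
  using component_subset_dominant mpt_in_dominant by (simp add: Wc_eq_component_mpt)

lemma closure_Wc_subset_dominant:
  "2 \<le> b \<Longrightarrow> beta3 < b \<Longrightarrow> i < 3 \<Longrightarrow> closure (Wc b i) \<subseteq> {x. \<forall>j<3. coord x j \<le> coord x i}"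
  using closure_mono[OF Wc_subset_dominant] closure_dominant_subset by blast

lemma Wc_distinct_if_mpt_in_W:
  assumes "2 \<le> b" "beta3 < b" "i < 3" "j < 3" "i \<noteq> j" "mpt b i \<in> W b"
  shows "Wc b i \<noteq> Wc b j"
proof -
  have "mpt b i \<in> Wc b i" using assms(3,6) by (simp add: Wc_eq_component_mpt)
  moreover have "mpt b i \<notin> Wc b j"
    using Wc_subset_dominant[OF assms(1,2,4)] mpt_in_dominant[OF assms(2,3)]
      dominant_disjoint[OF assms(3-5)] by blast
  ultimately show ?thesis by blast
qed

lemma Sfrak_subset_sigma:
  assumes "2 \<le> b" "beta3 < b" "{i, j, k} = {0, 1, 2::nat}"
  shows "Sfrak b i j \<subseteq> {sigma b k}"
proof
  fix x assume x: "x \<in> Sfrak b i j"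
  note ijk = indices3[OF assms(3)]
  have i: "\<forall>l<3. coord x l \<le> coord x i" and j: "\<forall>l<3. coord x l \<le> coord x j"
    using x closure_Wc_subset_dominant[OF assms(1,2)] ijk by (auto simp: Sfrak_def)
  have xF: "x \<in> Xi" "F b x \<le> H b" using x closure_Wc_subset[of b i] by (auto simp: Sfrak_def)
  have tie: "coord x i = coord x j" "coord x k \<le> coord x i" using i j ijk by force+
  then have "F b x = H b" using F_ge_H_at_tie(1)[OF assms(1,2) xF(1) assms(3)] xF(2) by simp
  then show "x \<in> {sigma b k}" using F_ge_H_at_tie(2)[OF assms(1,2) xF(1) assms(3) tie] by simp
qed

lemma sigma_2: "i < 3 \<Longrightarrow> sigma 2 i = p_pt"
  by (simp add: sigma_eq_axis_pt q_beta_2 p_pt_eq_axis_pt)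

lemma axis_pt_in_W_2:
  assumes "i < 3" "p_beta 2 \<le> a" "a < 1/3" shows "axis_pt i a \<in> W 2"
proof -
  have "phi 2 a < phi 2 (1/3)"
    using phi_increasing_p_to_q[OF beta3_less_2 assms(2,3)] q_beta_2 by simp
  moreover have "axis_pt i a \<in> Xi" using assms p_beta[OF beta3_less_2] by (intro axis_pt_in_Xi) auto
  ultimately show ?thesis by (simp add: W_def F_axis_pt[OF assms(1)] H_eq_phi q_beta_2)
qed

lemma p_beta_2_less: "p_beta 2 < 1/3"
  using p_beta[OF beta3_less_2] m0_bounds by simp

lemma mpt_in_W_2: "i < 3 \<Longrightarrow> mpt 2 i \<in> W 2"
  using axis_pt_in_W_2[of i "p_beta 2"] p_beta_2_less by (simp add: mpt_eq_axis_pt)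

lemma p_pt_in_closure_Wc_2: assumes "i < 3" shows "p_pt \<in> closure (Wc 2 i)"
proof -
  have "axis_pt i a \<in> Wc 2 i" if "a \<in> {p_beta 2..<1/3}" for a
    using axis_segment_in_component[of "{p_beta 2..<1/3}" i 2 "p_beta 2" a] axis_pt_in_W_2[OF assms]
      that assms p_beta_2_less
    by (simp add: Wc_eq_component_mpt mpt_eq_axis_pt)
  then have "axis_pt i ` {p_beta 2..<1/3} \<subseteq> Wc 2 i" by blast
  then have "axis_pt i (1/3) \<in> closure (Wc 2 i)"
    by (intro closure_image_atLeastLessThan[OF p_beta_2_less] continuous_on_axis_pt)
  then show ?thesis using p_pt_eq_axis_pt[OF assms] by simp
qed

lemma Sfrak_2: assumes "i < 3" "j < 3" "i \<noteq> j" shows "Sfrak 2 i j = {p_pt}"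
proof
  obtain k where k: "{i, j, k} = {0, 1, 2::nat}" using indices3_complete[OF assms] by blast
  show "Sfrak 2 i j \<subseteq> {p_pt}"
    using Sfrak_subset_sigma[OF order.refl beta3_less_2 k] sigma_2 indices3(3)[OF k] by simp
  show "{p_pt} \<subseteq> Sfrak 2 i j"
    using p_pt_in_closure_Wc_2 assms by (simp add: Sfrak_def)
qed

section \<open>Local minima of the free energy\<close>

definition vertex :: "nat \<Rightarrow> real \<times> real" where
  "vertex k = (if k = 1 then (1, 0) else if k = 2 then (0, 1) else (0, 0))"

lemma coord_transfer:
  assumes "{k, j, l} = {0, 1, 2::nat}"
  shows "coord (y + t *\<^sub>R (vertex k - vertex j)) k = coord y k + t"
    "coord (y + t *\<^sub>R (vertex k - vertex j)) j = coord y j - t"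
    "coord (y + t *\<^sub>R (vertex k - vertex j)) l = coord y l"
proof -
  note kjl = indices3[OF assms]
  obtain a c where y: "y = (a, c)" by (cases y)
  have "k = 0 \<or> k = 1 \<or> k = 2" "j = 0 \<or> j = 1 \<or> j = 2" "l = 0 \<or> l = 1 \<or> l = 2"
    using kjl by auto
  then show "coord (y + t *\<^sub>R (vertex k - vertex j)) k = coord y k + t"
    "coord (y + t *\<^sub>R (vertex k - vertex j)) j = coord y j - t"
    "coord (y + t *\<^sub>R (vertex k - vertex j)) l = coord y l"
    using kjl unfolding y by (elim disjE; simp add: coord_def vertex_def algebra_simps)+
qed

lemma dist_transfer: "dist (y + t *\<^sub>R (vertex k - vertex j)) y \<le> 2 * \<bar>t\<bar>"
proof -
  have "norm (vertex k) \<le> 1" "norm (vertex j) \<le> 1" by (auto simp: vertex_def norm_Pair)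
  then have "norm (vertex k - vertex j) \<le> 2"
    using norm_triangle_ineq4[of "vertex k" "vertex j"] by linarith
  then have "\<bar>t\<bar> * norm (vertex k - vertex j) \<le> \<bar>t\<bar> * 2" by (intro mult_left_mono) auto
  then show ?thesis by (simp add: dist_norm mult.commute)
qed

lemma transfer_in_Xi:
  assumes "{k, j, l} = {0, 1, 2::nat}" "y \<in> Xi" "- coord y k \<le> t" "t \<le> coord y j"
  shows "y + t *\<^sub>R (vertex k - vertex j) \<in> Xi"
proof -
  have "0 \<le> coord (y + t *\<^sub>R (vertex k - vertex j)) m" if "m < 3" for m
    using indices3_cases[OF assms(1) that]
  proof (elim disjE)
    assume "m = k" then show ?thesis using coord_transfer(1)[OF assms(1)] assms(3) by simp
  next
    assume "m = j" then show ?thesis using coord_transfer(2)[OF assms(1)] assms(4) by simp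
  next
    assume "m = l"
    then show ?thesis
      using coord_transfer(3)[OF assms(1)] coord_nonneg[OF assms(2) indices3(3)[OF assms(1)]]
        by simp
  qed
  then show ?thesis by (simp add: Xi_iff_coord_nonneg)
qed

lemma F_transfer:
  assumes "{k, j, l} = {0, 1, 2::nat}"
  shows "F b (y + t *\<^sub>R (vertex k - vertex j))
           = G b (coord y k + t) + G b (coord y j - t) + G b (coord y l) + 1/4"
  using F_eq_sum_G_indices3[OF assms] coord_transfer[OF assms] by simp

text \<open>G' tends to -\<infinity> at 0, so moving a little mass onto an empty coordinate pays off.\<close>
lemma G_transfer_to_zero_decreases:
  assumes "0 < b" "0 < c" "c \<le> 1"
  shows "\<exists>e0>0. e0 \<le> c \<and> (\<forall>e. 0 < e \<and> e \<le> e0 \<longrightarrow> G b e + G b (c - e) < G b c)"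
proof -
  define M where "M = - 3/2 + (ln (3 * c / 2) + 1) / b"
  define e0 where "e0 = min (c / 2) (exp (b * M) / 6)"
  have "G b e + G b (c - e) < G b c" if e: "0 < e" "e \<le> e0" for e
  proof -
    have e': "e \<le> c / 2" "e \<le> exp (b * M) / 6" using e by (auto simp: e0_def)
    obtain z where z: "c - e < z" "z < c" "G b c - G b (c - e) = e * G' b z"
      using G_mean_value[of "c - e" c b] e e' assms by auto
    have "ln (3 * c / 2) \<le> ln (3 * z)" using z e' assms by (subst ln_le_cancel_iff) auto
    then have "M \<le> G' b z"
      using z assms divide_right_mono[of "ln (3 * c / 2) + 1" "ln (3 * z) + 1" b]
      by (simp add: M_def G'_def)
    have "ln (3 * e) \<le> ln (exp (b * M) / 2)" using e e' by (subst ln_le_cancel_iff) auto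
    also have "\<dots> < b * M" by (simp add: ln_div)
    finally have "ln (3 * e) / b < M" using assms(1) by (simp add: pos_divide_less_eq mult.commute)
    then have "e * (ln (3 * e) / b) < e * M" using e by (intro mult_strict_left_mono) auto
    moreover have "G b e \<le> e * (ln (3 * e) / b)" using e by (simp add: G_def xlog3_def)
    ultimately have "G b e < e * M" by linarith
    also have "\<dots> \<le> e * G' b z" using \<open>M \<le> G' b z\<close> e by (simp add: mult_left_mono)
    finally show ?thesis using z by simp
  qed
  moreover have "0 < e0" "e0 \<le> c" using assms by (auto simp: e0_def)
  ultimately show ?thesis by blast
qed

lemma boundary_point_not_local_min:
  assumes "0 < b" "y \<in> Xi" "k < 3" "coord y k = 0" "0 < r"
  shows "\<exists>x \<in> ball y r \<inter> Xi. F b x < F b y"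
proof -
  obtain j0 l0 where jl0: "{k, j0, l0} = {0, 1, 2::nat}" using indices3_exists[OF assms(3)] by blast
  have "coord y j0 + coord y l0 = 1" using coord_sum_indices3[OF jl0, of y] assms(4) by simp
  then obtain j l where jl: "{k, j, l} = {0, 1, 2::nat}" and cj: "0 < coord y j"
    using jl0 coord_nonneg[OF assms(2)] indices3[OF jl0]
    by (metis add_cancel_right_left insert_commute less_eq_real_def zero_neq_one)
  have "coord y j \<le> 1"
    using coord_sum_indices3[OF jl, of y] assms(4) coord_nonneg[OF assms(2) indices3(3)[OF jl]]
      by simp
  then obtain e0 where e0: "0 < e0" "e0 \<le> coord y j"
    and gain: "\<And>e. 0 < e \<Longrightarrow> e \<le> e0 \<Longrightarrow> G b e + G b (coord y j - e) < G b (coord y j)"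
    using G_transfer_to_zero_decreases[OF assms(1) cj] by blast
  define e where "e = min e0 (r / 4)"
  define x where "x = y + e *\<^sub>R (vertex k - vertex j)"
  have e: "0 < e" "e \<le> e0" "e \<le> r / 4" using e0 assms(5) by (auto simp: e_def)
  have "x \<in> Xi" unfolding x_def using e e0 assms(2,4) by (intro transfer_in_Xi[OF jl]) auto
  moreover have "x \<in> ball y r" using dist_transfer[of y e k j] e by (simp add: x_def dist_commute)
  moreover have "F b x < F b y"
    using F_transfer[OF jl, of b y e] F_transfer[OF jl, of b y 0] gain[OF e(1,2)] assms(4)
    by (simp add: x_def)
  ultimately show ?thesis by blast
qed

lemma local_min_imp_G'_eq:
  assumes "{k, j, l} = {0, 1, 2::nat}" "y \<in> Xi" "0 < coord y k" "0 < coord y j" "0 < r"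
    and min: "\<forall>x \<in> ball y r \<inter> Xi. F b y \<le> F b x"
  shows "G' b (coord y k) = G' b (coord y j)"
proof -
  define f where "f t = F b (y + t *\<^sub>R (vertex k - vertex j))" for t
  have "(G b has_real_derivative G' b (coord y k + 0)) (at (coord y k + 0))"
       "(G b has_real_derivative G' b (coord y j - 0)) (at (coord y j - 0))"
    using G_has_real_derivative assms(3,4) by simp_all
  moreover have "((\<lambda>t. coord y k + t) has_real_derivative 1) (at 0)"
     "((\<lambda>t. coord y j - t) has_real_derivative -1) (at 0)"
    by (auto intro!: derivative_eq_intros)
  ultimately have "((\<lambda>t. G b (coord y k + t) + G b (coord y j - t)) has_real_derivative
      (G' b (coord y k + 0) * 1 + G' b (coord y j - 0) * -1)) (at 0)"
    by (intro DERIV_add DERIV_chain2[where f="G b"])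
  from DERIV_add[OF DERIV_add[OF this DERIV_const] DERIV_const]
  have "(f has_real_derivative (G' b (coord y k) - G' b (coord y j))) (at 0)"
    unfolding f_def F_transfer[OF assms(1)] by simp
  moreover define d where "d = min (r/2) (min (coord y k) (coord y j))"
  have "0 < d" using assms by (simp add: d_def)
  moreover have "f 0 \<le> f t" if t: "\<bar>0 - t\<bar> < d" for t
  proof -
    have "y + t *\<^sub>R (vertex k - vertex j) \<in> Xi"
      using t by (intro transfer_in_Xi[OF assms(1,2)]) (auto simp: d_def)
    moreover have "dist (y + t *\<^sub>R (vertex k - vertex j)) y < r"
      using dist_transfer[of y t k j] t by (simp add: d_def)
    ultimately show ?thesis using min by (auto simp: f_def dist_commute)
  qed
  ultimately have "G' b (coord y k) - G' b (coord y j) = 0"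
    using DERIV_local_min by blast
  then show ?thesis by simp
qed

text \<open>G' is strictly concave with its maximum at 2/(3b), so it takes every value at most
  once on each side of that point.\<close>
lemma G'_eq_imp_between:
  assumes "0 < u" "u < v" "0 < b" "G' b u = G' b v"
  shows "u < 2 / (3 * b) \<and> 2 / (3 * b) < v"
proof -
  have "continuous_on {u..v} (G' b)"
    using assms DERIV_isCont[OF G'_has_real_derivative]
      by (intro continuous_at_imp_continuous_on) auto
  moreover have "G' b differentiable (at x)" if "u < x" "x < v" for x
    using G'_has_real_derivative[of x b] that assms by (auto simp: real_differentiable_def)
  ultimately obtain l z
    where z: "u < z" "z < v" "DERIV (G' b) z :> l" "G' b v - G' b u = (v - u) * l"
    using MVT[OF assms(2)] by blast
  have "l = - 3/2 + 1 / (b * z)" using DERIV_unique[OF z(3) G'_has_real_derivative] z assms by auto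
  moreover have "l = 0" using z(4) assms by simp
  ultimately have "z = 2 / (3 * b)" using assms z by (simp add: field_simps)
  then show ?thesis using z by simp
qed

lemma G'_eq_three_imp_two_equal:
  assumes "0 < b" "0 < u" "0 < v" "0 < w" "G' b u = G' b v" "G' b u = G' b w"
  shows "u = v \<or> u = w \<or> v = w"
proof -
  have side: "(x < 2 / (3 * b)) \<noteq> (y < 2 / (3 * b))"
    if "0 < x" "0 < y" "x \<noteq> y" "G' b x = G' b y" for x y
    using G'_eq_imp_between[of x y b] G'_eq_imp_between[of y x b] that assms(1)
    by (cases x y rule: linorder_cases) auto
  show ?thesis using side[of u v] side[of u w] side[of v w] assms by metis
qed

lemma interior_critical_point_on_axis:
  assumes "beta3 < b" "\<And>k. k < 3 \<Longrightarrow> 0 < coord y k"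
    and "\<And>k. k < 3 \<Longrightarrow> G' b (coord y k) = G' b (coord y 0)"
  obtains k a where "k < 3" "y = axis_pt k a" "a = 1/3 \<or> a = p_beta b \<or> a = q_beta b"
proof -
  have b: "0 < b" using assms(1) beta3_pos by simp
  have "0 < coord y 0" "0 < coord y 1" "0 < coord y 2" by (rule assms(2); simp)+
  moreover have "G' b (coord y 0) = G' b (coord y 1)" "G' b (coord y 0) = G' b (coord y 2)"
    by (rule assms(3)[symmetric]; simp)+
  ultimately have "coord y 0 = coord y 1 \<or> coord y 0 = coord y 2 \<or> coord y 1 = coord y 2"
    by (rule G'_eq_three_imp_two_equal[OF b])
  then obtain i j k where ijk: "{i, j, k} = {0, 1, 2::nat}" "coord y i = coord y j"
  proof (elim disjE)
    assume "coord y 0 = coord y 1" then show thesis using that[of 0 1 2] by simp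
  next
    assume "coord y 0 = coord y 2" then show thesis
      using that[of 0 2 1] by (simp add: insert_commute)
  next
    assume "coord y 1 = coord y 2" then show thesis
      using that[of 1 2 0] by (simp add: insert_commute)
  qed
  define a where "a = coord y i"
  note ijk' = indices3[OF ijk(1)]
  have y: "y = axis_pt k a" by (rule axis_pt_eqI[OF ijk(1)]) (use ijk(2) in \<open>simp_all add: a_def\<close>)
  have ck: "coord y k = 1 - 2*a" using coord_axis_pt[OF ijk'(3,3), of a] y by simp
  have a: "0 < a" "a < 1/2" using assms(2)[OF ijk'(1)] assms(2)[OF ijk'(3)] ck by (auto simp: a_def)
  have "G' b a = G' b (1 - 2*a)"
    using assms(3)[OF ijk'(1)] assms(3)[OF ijk'(3)] ck by (simp add: a_def)
  then have "3/2 * (1 - 3*a) * (1 - f0 a / b) = 0" using G'_axis_diff[OF a b] by simp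
  then have "a = 1/3 \<or> f0 a = b" using b by auto
  then show thesis using that[OF ijk'(3) y] f0_eq_iff_p_beta_or_q_beta[OF assms(1) a] by blast
qed

lemma axis_critical_point_in_dominant:
  assumes "2 < b" "beta3 < b" "i < 3" "k < 3" "axis_pt k a \<in> dominant i"
    and "a = 1/3 \<or> a = p_beta b \<or> a = q_beta b"
  shows "axis_pt k a = mpt b i"
proof -
  obtain j l where jl: "{k, j, l} = {0, 1, 2::nat}" using indices3_exists[OF assms(4)] by blast
  note kjl = indices3[OF jl]
  have dom: "m < 3 \<Longrightarrow> m \<noteq> i \<Longrightarrow> coord (axis_pt k a) m < coord (axis_pt k a) i" for m
    using assms(5) by (auto simp: dominant_def)
  have c: "coord (axis_pt k a) j = a" "coord (axis_pt k a) l = a" "coord (axis_pt k a) k = 1 - 2*a"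
    using coord_axis_pt[OF assms(4)] kjl by auto
  have "i = k"
    using indices3_cases[OF jl assms(3)] dom[of l] dom[of j] c kjl by auto
  then have "a < 1 - 2*a" using dom[of j] c kjl by auto
  then have "a = p_beta b" using assms(6) q_beta_gt_one_third[OF assms(1,2)] by auto
  then show ?thesis using \<open>i = k\<close> by (simp add: mpt_eq_axis_pt)
qed

text \<open>The minimum of F over the compact closure of a component is attained inside the
  component (it lies below the level H b) and away from the boundary of Xi.\<close>
lemma component_W_has_interior_local_min:
  assumes "0 < b" "z \<in> W b"
  obtains y r where "y \<in> connected_component_set (W b) z" "0 < r" "\<And>k. k < 3 \<Longrightarrow> 0 < coord y k"
    "\<forall>x \<in> ball y r \<inter> Xi. F b y \<le> F b x"
proof -
  define C where "C = connected_component_set (W b) z"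
  have CX: "closure C \<subseteq> Xi"
    using closure_mono[of C Xi] W_subset_Xi closed_Xi connected_component_subset
    by (force simp: C_def closure_closed)
  have "compact (closure C)"
    using CX bounded_Xi by (simp add: compact_eq_bounded_closed bounded_subset)
  moreover have zC: "z \<in> C" using assms(2) by (simp add: C_def)
  ultimately obtain y where y: "y \<in> closure C" "\<And>w. w \<in> closure C \<Longrightarrow> F b y \<le> F b w"
    using continuous_attains_inf[OF _ _ continuous_on_subset[OF continuous_on_F CX]] closure_subset
    by blast
  have "F b y \<le> F b z" using y(2) zC closure_subset by blast
  then have yW: "y \<in> W b" using assms(2) y(1) CX by (auto simp: W_def)
  then obtain r where r: "0 < r" "ball y r \<inter> Xi \<subseteq> C"
    using component_W_absorbs_ball[OF yW y(1)[unfolded C_def]] unfolding C_def by blast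
  have yX: "y \<in> Xi" using yW W_subset_Xi by blast
  have "y \<in> ball y r \<inter> Xi" using r(1) yX by auto
  then have yC: "y \<in> C" using r(2) by blast
  have min: "\<forall>x \<in> ball y r \<inter> Xi. F b y \<le> F b x" using r y(2) closure_subset by blast
  have "0 < coord y k" if "k < 3" for k
  proof (rule ccontr)
    assume "\<not> 0 < coord y k"
    then have "coord y k = 0" using coord_nonneg[OF yX that] by simp
    then show False
      using boundary_point_not_local_min[OF assms(1) yX that _ r(1)] min by force
  qed
  then show thesis using that[OF yC[unfolded C_def] r(1)] min by blast
qed

lemma mpt_in_component:
  assumes "2 < b" "beta3 < b" "i < 3" "z \<in> W b" "z \<in> dominant i"
  shows "mpt b i \<in> connected_component_set (W b) z"
proof -
  have b: "0 < b" using assms beta3_pos by simp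
  obtain y r where y: "y \<in> connected_component_set (W b) z" "0 < r" "\<And>k. k < 3 \<Longrightarrow> 0 < coord y k"
    and min: "\<forall>x \<in> ball y r \<inter> Xi. F b y \<le> F b x"
    using component_W_has_interior_local_min[OF b assms(4)] by blast
  have yX: "y \<in> Xi" using y(1) connected_component_subset W_subset_Xi by blast
  have "G' b (coord y k) = G' b (coord y 0)" if "k < 3" for k
  proof (cases "k = 0")
    case False
    have "{k, 0, 3 - k - 0} = {0, 1, 2::nat}" using indices3_complete[OF that _ False] by simp
    then show ?thesis using local_min_imp_G'_eq[OF _ yX y(3)[OF that] y(3)[of 0] y(2) min] by simp
  qed simp
  then obtain k a where k: "k < 3" "y = axis_pt k a" "a = 1/3 \<or> a = p_beta b \<or> a = q_beta b"
    using interior_critical_point_on_axis[OF assms(2) y(3)] by blast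
  have "y \<in> dominant i"
    using y(1) component_subset_dominant[OF less_imp_le[OF assms(1)] assms(2,3,5)] by blast
  then have "y = mpt b i" using axis_critical_point_in_dominant[OF assms(1-3) k(1)] k by blast
  then show ?thesis using y(1) by simp
qed

text \<open>For beta > 2 we have beta q_beta > 2/3, so moving mass from coordinate j to coordinate
  i at sigma_k lowers F below H: sigma_k is a saddle between m_i and m_j.\<close>
lemma transversal_path_in_W:
  assumes "2 < b" "beta3 < b" "{i, j, k} = {0, 1, 2::nat}"
  obtains s0 where "0 < s0"
    "\<And>s. 0 < s \<Longrightarrow> s \<le> s0 \<Longrightarrow> sigma b k + s *\<^sub>R (vertex i - vertex j) \<in> W b \<inter> dominant i"
proof -
  define q where "q = q_beta b"
  have q: "1/3 < q" "q < 1/2" "f0 q = b"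
    using q_beta_gt_one_third[OF assms(1,2)] q_beta[OF assms(2)]
    by (auto simp: q_def)
  have b: "0 < b" using assms beta3_pos by simp
  have "2/3 < q * b" using mult_f0_greater_two_thirds[OF q(1,2)] q(3) by (simp add: mult.commute)
  then obtain s0 where s0: "0 < s0" "s0 < q"
    and lower: "\<And>s. 0 < s \<Longrightarrow> s \<le> s0 \<Longrightarrow> G b (q + s) + G b (q - s) < 2 * G b q"
    using G_sym_sum_lt[of q b] q b by auto
  note ijk = indices3[OF assms(3)]
  have jik: "{i, j, k} = {i, j, k}" ..
  have c: "coord (sigma b k) i = q" "coord (sigma b k) j = q" "coord (sigma b k) k = 1 - 2*q"
    using coord_axis_pt[OF ijk(3)] ijk by (auto simp: sigma_eq_axis_pt q_def)
  have "sigma b k + s *\<^sub>R (vertex i - vertex j) \<in> W b \<inter> dominant i" if s: "0 < s" "s \<le> s0" for s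
  proof -
    have "sigma b k \<in> Xi" using ijk q by (simp add: sigma_eq_axis_pt q_def axis_pt_in_Xi)
    then have "sigma b k + s *\<^sub>R (vertex i - vertex j) \<in> Xi"
      using s s0 c by (intro transfer_in_Xi[OF assms(3)]) auto
    moreover have "F b (sigma b k + s *\<^sub>R (vertex i - vertex j)) < H b"
      using F_transfer[OF assms(3), of b "sigma b k" s] lower[OF s] c
      by (simp add: H_eq_phi phi_def q_def)
    moreover have "coord (sigma b k + s *\<^sub>R (vertex i - vertex j)) m
        < coord (sigma b k + s *\<^sub>R (vertex i - vertex j)) i" if "m < 3" "m \<noteq> i" for m
      using indices3_cases[OF assms(3) that(1)] that(2)
        coord_transfer[OF assms(3), of "sigma b k" s] c s q
      by auto
    then have "sigma b k + s *\<^sub>R (vertex i - vertex j) \<in> dominant i" by (simp add: dominant_def)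
    ultimately show ?thesis by (simp add: W_def)
  qed
  then show thesis using that[OF s0(1)] by blast
qed

lemma mpt_in_W_gt_2: assumes "2 < b" "beta3 < b" "i < 3" shows "mpt b i \<in> W b"
proof -
  obtain j k where ijk: "{i, j, k} = {0, 1, 2::nat}" using indices3_exists[OF assms(3)] by blast
  obtain s0 where "0 < s0" "sigma b k + s0 *\<^sub>R (vertex i - vertex j) \<in> W b \<inter> dominant i"
    using transversal_path_in_W[OF assms(1,2) ijk] by (metis order.refl)
  then show ?thesis
    using mpt_in_component[OF assms] connected_component_subset by blast
qed

lemma sigma_in_closure_Wc:
  assumes "2 < b" "beta3 < b" "{i, j, k} = {0, 1, 2::nat}"
  shows "sigma b k \<in> closure (Wc b i)"
proof -
  define pt where "pt s = sigma b k + s *\<^sub>R (vertex i - vertex j)" for s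
  obtain s0 where s0: "0 < s0" and path: "\<And>s. 0 < s \<Longrightarrow> s \<le> s0 \<Longrightarrow> pt s \<in> W b \<inter> dominant i"
    using transversal_path_in_W[OF assms] unfolding pt_def by blast
  note i = indices3(1)[OF assms(3)]
  have cont: "continuous_on S pt" for S unfolding pt_def by (intro continuous_intros)
  have "pt ` {0<..s0} \<subseteq> connected_component_set (W b) (pt s0)"
    using path s0 by (intro connected_component_maximal connected_continuous_image[OF cont]) auto
  also have "\<dots> = Wc b i"
  proof -
    have "pt s0 \<in> W b" "pt s0 \<in> dominant i" using path[OF s0 order.refl] by auto
    from connected_component_eq[OF mpt_in_component[OF assms(1,2) i this]]
    show ?thesis using i by (simp add: Wc_eq_component_mpt)
  qed
  finally have "pt 0 \<in> closure (Wc b i)"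
    by (rule closure_image_greaterThanAtMost[OF s0 cont])
  then show ?thesis by (simp add: pt_def)
qed

section \<open>Separation by the level of q_beta for beta < 2\<close>

definition inner_region :: "real \<Rightarrow> (real \<times> real) set" where
  "inner_region b = {x. \<forall>j<3. coord x j < 1 - 2 * q_beta b}"

definition outer_region :: "real \<Rightarrow> nat \<Rightarrow> (real \<times> real) set" where
  "outer_region b i = dominant i \<inter> {x. 1 - 2 * q_beta b < coord x i}"

lemma open_inner_region: "open (inner_region b)"
proof -
  have "inner_region b = (\<Inter>j<3. {x. coord x j < 1 - 2 * q_beta b})" by (auto simp: inner_region_def)
  moreover have "open {x. coord x j < 1 - 2 * q_beta b}" for j
    by (intro open_Collect_less continuous_on_coord continuous_on_const)
  ultimately show ?thesis by (auto intro!: open_INT)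
qed

lemma open_outer_region: "open (outer_region b i)"
  unfolding outer_region_def
  by (intro open_Int open_dominant open_Collect_less continuous_on_coord continuous_on_const)

lemma closure_inner_region_subset:
  "closure (inner_region b) \<subseteq> {x. \<forall>j<3. coord x j \<le> 1 - 2 * q_beta b}"
proof (rule closure_minimal)
  have "{x. \<forall>j<3. coord x j \<le> 1 - 2 * q_beta b} = (\<Inter>j<3. {x. coord x j \<le> 1 - 2 * q_beta b})"
    by auto
  moreover have "closed {x. coord x j \<le> 1 - 2 * q_beta b}" for j
    by (intro closed_Collect_le continuous_on_coord continuous_on_const)
  ultimately show "closed {x. \<forall>j<3. coord x j \<le> 1 - 2 * q_beta b}" by (auto intro!: closed_INT)
qed (auto simp: inner_region_def less_imp_le)

lemma closure_outer_region_subset: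
  "closure (outer_region b i) \<subseteq> {x. 1 - 2 * q_beta b \<le> coord x i \<and> (\<forall>j<3. coord x j \<le> coord x i)}"
proof -
  have "closed {x. 1 - 2 * q_beta b \<le> coord x i}"
    by (intro closed_Collect_le continuous_on_coord continuous_on_const)
  then have "closure (outer_region b i) \<subseteq> {x. 1 - 2 * q_beta b \<le> coord x i}"
    by (intro closure_minimal) (auto simp: outer_region_def)
  moreover have "closure (outer_region b i) \<subseteq> closure (dominant i)"
    by (rule closure_mono) (auto simp: outer_region_def)
  ultimately show ?thesis using closure_dominant_subset by blast
qed

lemma inner_outer_region_disjoint: "i < 3 \<Longrightarrow> inner_region b \<inter> outer_region b i = {}"
  by (fastforce simp: inner_region_def outer_region_def)

lemma outer_regions_disjoint: "i < 3 \<Longrightarrow> j < 3 \<Longrightarrow> i \<noteq> j \<Longrightarrow> outer_region b i \<inter> outer_region b j = {}"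
  using dominant_disjoint by (auto simp: outer_region_def)

context
  fixes b :: real
  assumes beta: "beta3 < b" "b < 2"
begin

lemma q_beta_lt_2: "0 < q_beta b" "q_beta b < 1/3" "q_beta b * b < 2/3" "0 < b"
proof -
  show q3: "q_beta b < 1/3" using q_beta_less_one_third[OF beta(2,1)] .
  show q0: "0 < q_beta b" using q_beta[OF beta(1)] m0_bounds by simp
  show "q_beta b * b < 2/3"
    using mult_f0_less_two_thirds[OF q0 q3] q_beta(3)[OF beta(1)] by (simp add: mult.commute)
  show "0 < b" using beta beta3_pos by simp
qed

text \<open>For beta < 2 we have beta q_beta < 2/3, so the saddles are transversal minima.\<close>
lemma F_gt_H_at_tie_beyond_level:
  assumes "x \<in> Xi" "{i, j, k} = {0, 1, 2::nat}" "coord x i = a" "coord x j = a"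
    and "1 - 2 * q_beta b \<le> a"
  shows "H b < F b x"
proof -
  define q where "q = q_beta b"
  note k = indices3(3)[OF assms(2)]
  have x: "x = axis_pt k a" by (rule axis_pt_eqI[OF assms(2-4)])
  then have "a \<le> 1/2" using coord_nonneg[OF assms(1) k] coord_axis_pt[OF k k, of a] by simp
  then have q4: "1/4 \<le> q" using assms(5) by (simp add: q_def)
  have "2 * G b q < G b (q + (1 - 3*q)) + G b (q - (1 - 3*q))"
    using q_beta_lt_2 q4 by (intro G_sym_sum_gt) (auto simp: q_def)
  then have "phi b q < phi b (1 - 2*q)" by (simp add: phi_def algebra_simps)
  also have "phi b (1 - 2*q) \<le> phi b a"
    using phi_increasing_beyond_q[OF beta(1), of "1 - 2*q" a] q_beta_lt_2 assms(5) \<open>a \<le> 1/2\<close>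
    by (cases "1 - 2*q = a") (auto simp: q_def)
  finally show ?thesis using x k by (simp add: H_eq_phi F_axis_pt q_def)
qed

lemma F_ge_H_on_level:
  assumes "x \<in> Xi" "i < 3" "coord x i = 1 - 2 * q_beta b" "\<And>j. j < 3 \<Longrightarrow> coord x j \<le> 1 - 2 * q_beta b"
  shows "H b \<le> F b x" "F b x = H b \<Longrightarrow> x = sigma b i"
proof -
  define q where "q = q_beta b"
  obtain j k where ijk: "{i, j, k} = {0, 1, 2::nat}" using indices3_exists[OF assms(2)] by blast
  note jk = indices3(2,3)[OF ijk]
  have sum: "coord x j + coord x k = 2 * q"
    using coord_sum_indices3[OF ijk, of x] assms(3) by (simp add: q_def)
  define s where "s = \<bar>coord x j - q\<bar>"
  have s: "s \<le> q" using coord_nonneg[OF assms(1) jk(1)] coord_nonneg[OF assms(1) jk(2)] sum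
    by (auto simp: s_def)
  have "coord x k = 2 * q - coord x j" using sum by simp
  then have "G b (coord x j) + G b (coord x k) = G b (q + s) + G b (q - s)"
    by (cases "coord x j \<le> q") (auto simp: s_def abs_if)
  then have Fx: "F b x = G b (1 - 2*q) + G b (q + s) + G b (q - s) + 1/4"
    using F_eq_sum_G_indices3[OF ijk, of b x] assms(3) by (simp add: q_def)
  have H: "H b = G b (1 - 2*q) + 2 * G b q + 1/4" by (simp add: H_eq_phi phi_def q_def)
  have "s = 0 \<and> x = sigma b i \<or> 0 < s \<and> H b < F b x"
  proof (cases "s = 0")
    case True
    then have "coord x j = q" "coord x k = q" using sum by (auto simp: s_def)
    then have "x = axis_pt i q" using axis_pt_eqI[of j k i x q] ijk by (simp add: insert_commute)
    then show ?thesis using True by (simp add: sigma_eq_axis_pt q_def)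
  next
    case False
    then have "2 * G b q < G b (q + s) + G b (q - s)"
      using q_beta_lt_2 s by (intro G_sym_sum_gt) (auto simp: q_def s_def)
    then show ?thesis using Fx H False by (simp add: s_def)
  qed
  then show "H b \<le> F b x" "F b x = H b \<Longrightarrow> x = sigma b i" using F_sigma[OF assms(2), of b] by auto
qed

lemma W_subset_regions:
  "W b \<subseteq> inner_region b \<union> outer_region b 0 \<union> outer_region b 1 \<union> outer_region b 2"
proof
  fix x assume xW: "x \<in> W b"
  have x: "x \<in> Xi" "F b x < H b" using xW by (auto simp: W_def)
  show "x \<in> inner_region b \<union> outer_region b 0 \<union> outer_region b 1 \<union> outer_region b 2"
  proof (rule ccontr)
    assume nx: "\<not> ?thesis"
    then obtain l where l: "l < 3" "1 - 2 * q_beta b \<le> coord x l"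
      by (auto simp: inner_region_def not_less)
    show False
    proof (cases "x \<in> dominant 0 \<union> dominant 1 \<union> dominant 2")
      case False
      then obtain i j k
        where ijk: "{i, j, k} = {0, 1, 2::nat}" "coord x i = coord x j" "coord x k \<le> coord x i"
        using tie_if_not_dominant by blast
      have "coord x l \<le> coord x i" using indices3_cases[OF ijk(1) l(1)] ijk by auto
      then have "H b < F b x"
        using F_gt_H_at_tie_beyond_level[OF x(1) ijk(1) refl ijk(2)[symmetric]] l by simp
      then show False using x by simp
    next
      case True
      then have "(0::nat) < 3 \<and> x \<in> dominant 0 \<or> (1::nat) < 3 \<and> x \<in> dominant 1 \<or>
          (2::nat) < 3 \<and> x \<in> dominant 2" by auto
      then obtain i where i: "i < 3" "x \<in> dominant i" by blast
      have max: "\<And>j. j < 3 \<Longrightarrow> coord x j \<le> coord x i" using i by (auto simp: dominant_def less_imp_le)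
      have "x \<notin> outer_region b i"
        using nx i(1) by (auto simp: numeral_3_eq_3 less_Suc_eq numeral_2_eq_2)
      then have "coord x i = 1 - 2 * q_beta b"
        using i(2) max[OF l(1)] l by (auto simp: outer_region_def)
      then have "H b \<le> F b x" using F_ge_H_on_level(1)[OF x(1) i(1)] max by simp
      then show False using x by simp
    qed
  qed
qed

lemma axis_pt_in_W_below_q:
  assumes "i < 3" "p_beta b \<le> a" "a < q_beta b" shows "axis_pt i a \<in> W b"
proof -
  have "phi b a < phi b (q_beta b)"
    using phi_increasing_p_to_q[OF beta(1) assms(2,3) order.refl] q_beta_lt_2 by simp
  moreover have "axis_pt i a \<in> Xi"
    using assms p_beta[OF beta(1)] q_beta_lt_2 by (intro axis_pt_in_Xi) auto
  ultimately show ?thesis by (simp add: W_def F_axis_pt[OF assms(1)] H_eq_phi)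
qed

lemma axis_pt_in_W_above_q:
  assumes "i < 3" "q_beta b < a" "a \<le> 1/3" shows "axis_pt i a \<in> W b"
proof -
  have "phi b a < phi b (q_beta b)"
    using phi_decreasing_q_to_third[OF beta(1) order.refl assms(2)] assms(3) by simp
  moreover have "axis_pt i a \<in> Xi" using assms q_beta_lt_2 by (intro axis_pt_in_Xi) auto
  ultimately show ?thesis by (simp add: W_def F_axis_pt[OF assms(1)] H_eq_phi)
qed

lemma p_beta_less_q_beta: "p_beta b < q_beta b"
  using p_beta[OF beta(1)] q_beta[OF beta(1)] by simp

lemma mpt_in_W_lt_2: "i < 3 \<Longrightarrow> mpt b i \<in> W b"
  using axis_pt_in_W_below_q[of i "p_beta b"] p_beta_less_q_beta by (simp add: mpt_eq_axis_pt)

lemma p_pt_in_W: "p_pt \<in> W b"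
  using axis_pt_in_W_above_q[of 0 "1/3"] q_beta_lt_2 p_pt_eq_axis_pt[of 0] by simp

lemma Wc_subset_outer_region: assumes "i < 3" shows "Wc b i \<subseteq> outer_region b i"
proof -
  have "mpt b i \<in> outer_region b i"
    using mpt_in_dominant[OF beta(1) assms] p_beta_less_q_beta p_beta[OF beta(1)] assms
    by (auto simp: outer_region_def mpt_eq_axis_pt coord_axis_pt)
  moreover define B where "B = inner_region b \<union> (\<Union>j\<in>{..<3} - {i}. outer_region b j)"
  have "open B" unfolding B_def by (auto intro!: open_inner_region open_outer_region)
  moreover have "outer_region b i \<inter> B = {}"
    unfolding B_def using inner_outer_region_disjoint outer_regions_disjoint assms by blast
  moreover have "W b \<subseteq> outer_region b i \<union> B"
    using W_subset_regions assms unfolding B_def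
      by (auto simp: numeral_3_eq_3 less_Suc_eq numeral_2_eq_2)
  ultimately show ?thesis
    using connected_component_subset_open_cover[OF _ open_outer_region] assms
    by (simp add: Wc_eq_component_mpt)
qed

lemma Wc_3_subset_inner_region: "Wc b 3 \<subseteq> inner_region b"
proof -
  have "p_pt \<in> inner_region b"
    using q_beta_lt_2 by (auto simp: inner_region_def p_pt_eq_axis_pt[of 0] coord_axis_pt)
  moreover define B where "B = outer_region b 0 \<union> outer_region b 1 \<union> outer_region b 2"
  have "open B" unfolding B_def by (auto intro!: open_outer_region)
  moreover have "inner_region b \<inter> B = {}"
    unfolding B_def by (simp add: Int_Un_distrib inner_outer_region_disjoint)
  moreover have "W b \<subseteq> inner_region b \<union> B" using W_subset_regions unfolding B_def by blast
  ultimately show ?thesis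
    using connected_component_subset_open_cover[OF _ open_inner_region] by (simp add: Wc_def)
qed

lemma Wc_distinct_lt_2:
  assumes "i \<le> 3" "j \<le> 3" "i \<noteq> j" shows "Wc b i \<noteq> Wc b j"
proof -
  define region where "region l = (if l = 3 then inner_region b else outer_region b l)" for l
  have sub: "Wc b l \<subseteq> region l" if "l \<le> 3" for l
    using that Wc_subset_outer_region Wc_3_subset_inner_region by (auto simp: region_def)
  have "region i \<inter> region j = {}"
    using assms inner_outer_region_disjoint outer_regions_disjoint
    by (auto simp: region_def Int_commute)
  moreover have "(if i = 3 then p_pt else mpt b i) \<in> Wc b i"
    using mpt_in_W_lt_2 p_pt_in_W assms(1) by (auto simp: Wc_def)
  ultimately show ?thesis using sub assms by blast
qed

lemma Sfrak_lt_2_outer: assumes "i < 3" "j < 3" "i \<noteq> j" shows "Sfrak b i j = {}"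
proof (rule ccontr)
  assume "Sfrak b i j \<noteq> {}"
  then obtain x where x: "x \<in> closure (Wc b i)" "x \<in> closure (Wc b j)" by (auto simp: Sfrak_def)
  have xi: "1 - 2 * q_beta b \<le> coord x i" "\<forall>l<3. coord x l \<le> coord x i"
    and xj: "\<forall>l<3. coord x l \<le> coord x j"
    using x closure_mono[OF Wc_subset_outer_region] closure_outer_region_subset assms by blast+
  have xF: "x \<in> Xi" "F b x \<le> H b" using x(1) closure_Wc_subset by blast+
  obtain k where ijk: "{i, j, k} = {0, 1, 2::nat}" using indices3_complete[OF assms] by blast
  have "coord x i = coord x j" using xi xj assms by force
  then have "H b < F b x" using F_gt_H_at_tie_beyond_level[OF xF(1) ijk refl] xi by simp
  then show False using xF by simp
qed

lemma Sfrak_lt_2_inner: assumes "i < 3" shows "Sfrak b i 3 = {sigma b i}"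
proof
  show "Sfrak b i 3 \<subseteq> {sigma b i}"
  proof
    fix x assume "x \<in> Sfrak b i 3"
    then have x: "x \<in> closure (Wc b i)" "x \<in> closure (Wc b 3)" by (auto simp: Sfrak_def)
    have "1 - 2 * q_beta b \<le> coord x i"
      using x(1) closure_mono[OF Wc_subset_outer_region[OF assms]] closure_outer_region_subset
        by blast
    moreover have le: "\<forall>l<3. coord x l \<le> 1 - 2 * q_beta b"
      using x(2) closure_mono[OF Wc_3_subset_inner_region] closure_inner_region_subset by blast
    ultimately have ci: "coord x i = 1 - 2 * q_beta b" using assms by force
    have xF: "x \<in> Xi" "F b x \<le> H b" using x(1) closure_Wc_subset by blast+
    then show "x \<in> {sigma b i}" using F_ge_H_on_level[OF xF(1) assms ci] le by force
  qed
next
  have "axis_pt i a \<in> Wc b i" if "a \<in> {p_beta b..<q_beta b}" for a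
    using axis_segment_in_component[of "{p_beta b..<q_beta b}" i b "p_beta b" a]
      axis_pt_in_W_below_q
      that assms p_beta_less_q_beta
    by (simp add: Wc_eq_component_mpt mpt_eq_axis_pt)
  then have "axis_pt i (q_beta b) \<in> closure (Wc b i)"
    by (intro closure_image_atLeastLessThan[OF p_beta_less_q_beta continuous_on_axis_pt]) auto
  moreover have "axis_pt i a \<in> Wc b 3" if "a \<in> {q_beta b<..1/3}" for a
    using axis_segment_in_component[of "{q_beta b<..1/3}" i b "1/3" a] axis_pt_in_W_above_q
      that assms q_beta_lt_2
    by (simp add: Wc_def p_pt_eq_axis_pt[OF assms])
  then have "axis_pt i (q_beta b) \<in> closure (Wc b 3)"
    using q_beta_lt_2
    by (intro closure_image_greaterThanAtMost[of "q_beta b" "1/3", OF _ continuous_on_axis_pt]) auto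
  ultimately show "{sigma b i} \<subseteq> Sfrak b i 3" by (simp add: Sfrak_def sigma_eq_axis_pt)
qed

end

lemma mpt_in_W_ge_2: "2 \<le> b \<Longrightarrow> beta3 < b \<Longrightarrow> i < 3 \<Longrightarrow> mpt b i \<in> W b"
  using mpt_in_W_2 mpt_in_W_gt_2 by (cases "b = 2") auto

lemma Sfrak_gt_2:
  assumes "2 < b" "beta3 < b" "{i, j, k} = {0, 1, 2::nat}"
  shows "Sfrak b i j = {sigma b k}"
proof
  show "Sfrak b i j \<subseteq> {sigma b k}" using Sfrak_subset_sigma assms by simp
  have "{j, i, k} = {0, 1, 2::nat}" using assms(3) by (simp add: insert_commute)
  then show "{sigma b k} \<subseteq> Sfrak b i j"
    using sigma_in_closure_Wc[OF assms(1,2)] assms(3) by (simp add: Sfrak_def)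
qed

theorem proposition4p4:
  shows
  "(\<forall>\<beta>. beta3 < \<beta> \<and> 2 \<le> \<beta> \<longrightarrow>
       (\<forall>i<3. \<forall>j<3. i \<noteq> j \<longrightarrow> Wc \<beta> i \<noteq> Wc \<beta> j))
   \<and> (\<forall>\<beta>. beta3 < \<beta> \<and> 2 < \<beta> \<longrightarrow>
       (\<forall>i j k. {i, j, k} = {0, 1, 2::nat} \<longrightarrow> Sfrak \<beta> i j = {sigma \<beta> k}))
   \<and> (beta3 < 2 \<longrightarrow> (\<forall>i<3. \<forall>j<3. i \<noteq> j \<longrightarrow> Sfrak 2 i j = {p_pt}))
   \<and> (\<forall>\<beta>. beta3 < \<beta> \<and> \<beta> < 2 \<longrightarrow>
       (\<forall>i\<le>3. \<forall>j\<le>3. i \<noteq> j \<longrightarrow> Wc \<beta> i \<noteq> Wc \<beta> j))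
   \<and> (\<forall>\<beta>. beta3 < \<beta> \<and> \<beta> < 2 \<longrightarrow>
       (\<forall>i<3. \<forall>j<3. i \<noteq> j \<longrightarrow> Sfrak \<beta> i j = {})
       \<and> (\<forall>i<3. Sfrak \<beta> i 3 = {sigma \<beta> i}))"
  using Wc_distinct_if_mpt_in_W[OF _ _ _ _ _ mpt_in_W_ge_2] Sfrak_gt_2 Sfrak_2
    Wc_distinct_lt_2 Sfrak_lt_2_outer Sfrak_lt_2_inner
  by auto


end
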